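(* Let $\mathcal{M}_L$ be an SCM over $\mathbf{V}_L$, let $\tau:\mathcal{D}_{\mathbf{V}_L}\to\mathcal{D}_{\mathbf{V}_H}$ be a constructive abstraction function with respect to an admissible intervariable clustering $\mathbb{C}$ of $\mathbf{V}_L$ and an intravariable clustering $\mathbb{D}$, and let $\mathcal{M}_H$ be an SCM over $\mathbf{V}_H$. Then $\mathcal{M}_H$ is $\mathcal{L}_3$-$\tau$ consistent with $\mathcal{M}_L$ if and only if there exist SCMs $\mathcal{M}_L'$ over $\mathbf{V}_L$ and $\mathcal{M}_H'$ over $\mathbf{V}_H$ such that $\mathcal{L}_3(\mathcal{M}_L')=\mathcal{L}_3(\mathcal{M}_L)$, $\mathcal{L}_3(\mathcal{M}_H')=\mathcal{L}_3(\mathcal{M}_H)$, and $\mathcal{M}_H'$ is a constructive $\tau$-abstraction of $\mathcal{M}_L'$.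
   Context: An SCM $\mathcal{M}=\langle \mathbf{U},\mathbf{V},\mathcal{F},P(\mathbf{U})\rangle$ consists of exogenous variables $\mathbf{U}$, endogenous variables $\mathbf{V}$, functions $\mathcal{F}=\{f_V:V\in\mathbf{V}\}$ where $f_V$ maps values of exogenous parents $\mathbf{U}_V\subseteq\mathbf{U}$ and endogenous parents $\mathbf{Pa}_V\subseteq\mathbf{V}\setminus\{V\}$ to a value of $V$, and a distribution $P(\mathbf{U})$ on $\mathcal{D}_{\mathbf{U}}$ (for a set $\mathbf{X}$, $\mathcal{D}_{\mathbf{X}}$ is the Cartesian product of the domains). All SCMs are recursive (acyclic), and endogenous variables have finite discrete domains. For $\mathbf{X}\subseteq\mathbf{V}$, $\mathbf{Y}_{\mathbf{x}}(\mathbf{u})$ denotes the value of $\mathbf{Y}$ under $\mathbf{U}=\mathbf{u}$ in the submodel where each $f_X$, $X\in\mathbf{X}$, is replaced by the constant given by $\mathbf{x}$; $\mathcal{M}_{[\mathbf{X}\leftarrow\mathbf{x}]}(\mathbf{u})$ denotes the tuple of values of all endogenous variables in that submodel. Counterfactual probabilities are $P^{\mathcal{M}}(\mathbf{y}_{1[\mathbf{x}_1]},\mathbf{y}_{2[\mathbf{x}_2]},\dots)=\int \mathbf{1}[\mathbf{Y}_{1[\mathbf{x}_1]}(\mathbf{u})=\mathbf{y}_1,\mathbf{Y}_{2[\mathbf{x}_2]}(\mathbf{u})=\mathbf{y}_2,\dots]\,dP(\mathbf{u})$; $\mathcal{L}_3(\mathcal{M})$ is the set of all such distributions, $\mathcal{L}_2(\mathcal{M})$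 the subset with all $\mathbf{x}_i$ equal, $\mathcal{L}_1(\mathcal{M})$ the subset with all $\mathbf{X}_i=\emptyset$. Clusterings: an intervariable clustering of $\mathbf{V}_L$ is a set $\mathbb{C}=\{\mathbf{C}_1,\dots,\mathbf{C}_n\}$ that is a partition of a subset of $\mathbf{V}_L$; it is admissible w.r.t. an SCM if for every $\mathbf{C}_i$ and every $V\in\mathbf{C}_i$, no descendant of $V$ outside $\mathbf{C}_i$ is an ancestor of a variable in $\mathbf{C}_i$ (this is assumed throughout). An intravariable clustering w.r.t. $\mathbb{C}$ is $\mathbb{D}=\{\mathbb{D}_{\mathbf{C}_i}\}$, where $\mathbb{D}_{\mathbf{C}_i}=\{\mathcal{D}^1_{\mathbf{C}_i},\dots,\mathcal{D}^{m_i}_{\mathbf{C}_i}\}$ is a partition of $\mathcal{D}_{\mathbf{C}_i}$. A function $\tau:\mathcal{D}_{\mathbf{V}_L}\to\mathcal{D}_{\mathbf{V}_H}$ is a constructive abstraction function w.r.t. $\mathbb{C},\mathbb{D}$ if there is a bijection between $\mathbf{V}_H$ and $\mathbb{C}$ ($V_{H,i}\leftrightarrow\mathbf{C}_i$), for each $i$ a bijection between $\mathcal{D}_{V_{H,i}}$ and $\mathbb{D}_{\mathbf{C}_i}$ ($v^j_{H,i}\leftrightarrow\mathcal{D}^j_{\mathbf{C}_i}$), and $\tau(\mathbf{v}_L)=(\tau_{\mathbf{C}_i}(\mathbf{c}_i):\mathbf{C}_i\in\mathbb{C})$ with $\tau_{\mathbf{C}_i}(\mathbf{c}_i)=v^j_{H,i}$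 iff $\mathbf{c}_i\in\mathcal{D}^j_{\mathbf{C}_i}$. For $\mathbf{W}_L$ a union of clusters, $\tau(\mathbf{w}_L)=(\tau_{\mathbf{C}_i}(\mathbf{c}_i):\mathbf{C}_i\subseteq\mathbf{W}_L)$ and $\tau(\mathbf{W}_L)$ is the corresponding set of high-level variables. $Q$-$\tau$ consistency: let $\mathbf{Y}_{L,*}=(\mathbf{Y}_{L,1[\mathbf{x}_{L,1}]},\mathbf{Y}_{L,2[\mathbf{x}_{L,2}]},\dots)$ where every $\mathbf{Y}_{L,i}$ and $\mathbf{X}_{L,i}$ is a union of clusters of $\mathbb{C}$, and $\mathbf{Y}_{H,*}=(\tau(\mathbf{Y}_{L,1})_{[\tau(\mathbf{x}_{L,1})]},\dots)$. For $\mathbf{y}_{H,*}$, let $Q=\sum_{\mathbf{y}_{L,*}:\tau(\mathbf{y}_{L,*})=\mathbf{y}_{H,*}}P(\mathbf{Y}_{L,*}=\mathbf{y}_{L,*})$ and $\tau(Q)=P(\mathbf{Y}_{H,*}=\mathbf{y}_{H,*})$. $\mathcal{M}_H$ is $Q$-$\tau$ consistent with $\mathcal{M}_L$ if the value of $Q$ in $\mathcal{M}_L$ equals the value of $\tau(Q)$ in $\mathcal{M}_H$; it is $\mathcal{L}_i$-$\tau$ consistent if this holds for all such $Q$ whose underlying counterfactual distribution is in layer $\mathcal{L}_i$. Constructive $\tau$-abstraction: for a set of variables $\mathbf{V}$ and value $\mathbf{x}$ of $\mathbf{X}\subseteq\mathbf{V}$, $\mathrm{Rst}(\mathbf{V},\mathbf{x})=\{\mathbf{v}\in\mathcal{D}_{\mathbf{V}}:\mathbf{v}\text{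 consistent with }\mathbf{x}\}$; $\omega_\tau(\mathbf{X}_L\leftarrow\mathbf{x}_L)=(\mathbf{X}_H\leftarrow\mathbf{x}_H)$ where $\tau(\mathrm{Rst}(\mathbf{V}_L,\mathbf{x}_L))=\mathrm{Rst}(\mathbf{V}_H,\mathbf{x}_H)$. The allowed low-level interventions $\mathcal{I}_L$ are exactly the interventions $\mathbf{X}_L\leftarrow\mathbf{x}_L$ with $\mathbf{X}_L$ a union of clusters of $\mathbb{C}$; the allowed high-level interventions $\mathcal{I}_H$ are all interventions on $\mathbf{V}_H$. $\mathcal{M}_H=\langle\mathbf{U}_H,\mathbf{V}_H,\mathcal{F}_H,P(\mathbf{U}_H)\rangle$ is a $\tau$-abstraction of $\mathcal{M}_L=\langle\mathbf{U}_L,\mathbf{V}_L,\mathcal{F}_L,P(\mathbf{U}_L)\rangle$ if (1) $\tau$ is surjective; (2) there is a surjective $\tau_{\mathbf{U}}:\mathcal{D}_{\mathbf{U}_L}\to\mathcal{D}_{\mathbf{U}_H}$ with $P(\mathbf{U}_H)$ the push-forward of $P(\mathbf{U}_L)$ under $\tau_{\mathbf{U}}$ and $\tau(\mathcal{M}_{L[\mathbf{X}_L\leftarrow\mathbf{x}_L]}(\mathbf{u}_L))=\mathcal{M}_{H[\omega_\tau(\mathbf{X}_L\leftarrow\mathbf{x}_L)]}(\tau_{\mathbf{U}}(\mathbf{u}_L))$ for all $\mathbf{u}_L$ and all $(\mathbf{X}_L\leftarrow\mathbf{x}_L)\in\mathcal{I}_L$; (3) $\mathcal{I}_H=\omega_\tau(\mathcal{I}_L)$.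 It is a strong $\tau$-abstraction if moreover $\mathcal{I}_H$ is the set of all interventions on $\mathbf{V}_H$, and a constructive $\tau$-abstraction if it is a strong $\tau$-abstraction and there is a partition $\{\mathbf{C}_1,\dots,\mathbf{C}_{n+1}\}$ of $\mathbf{V}_L$ ($n=|\mathbf{V}_H|$, $\mathbf{C}_1,\dots,\mathbf{C}_n$ nonempty) such that $\tau=(\tau_{\mathbf{C}_1},\dots,\tau_{\mathbf{C}_n})$ with $\tau_{\mathbf{C}_i}:\mathcal{D}_{\mathbf{C}_i}\to\mathcal{D}_{V_{H,i}}$. *)

theory Defs
  imports "HOL-Probability.Probability"
begin

text \<open>The exogenous
  state is a point u of an abstract measurable space (the tuple of all exogenous
  variables); f_W may depend on u (exogenous parents) and on the endogenous
  parents Pa W only.\<close>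

record ('v, 'a, 'u) scm =
  scm_pa :: "'v \<Rightarrow> 'v set"
  scm_f  :: "'v \<Rightarrow> 'u \<Rightarrow> ('v \<Rightarrow> 'a) \<Rightarrow> 'a"
  scm_P  :: "'u measure"

definition scm_edges :: "'v set \<Rightarrow> ('v, 'a, 'u) scm \<Rightarrow> ('v \<times> 'v) set" where
  "scm_edges V M = {(X, W). W \<in> V \<and> X \<in> scm_pa M W}"

definition is_scm :: "'v set \<Rightarrow> ('v \<Rightarrow> 'a set) \<Rightarrow> ('v, 'a, 'u) scm \<Rightarrow> bool" where
  "is_scm V D M \<longleftrightarrow>
     finite V \<and> (\<forall>W\<in>V. finite (D W) \<and> D W \<noteq> {}) \<and>
     (\<forall>W\<in>V. scm_pa M W \<subseteq> V - {W}) \<and>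
     acyclic (scm_edges V M) \<and>
     prob_space (scm_P M) \<and>
     (\<forall>W\<in>V. \<forall>u\<in>space (scm_P M). \<forall>v\<in>PiE V D. scm_f M W u v \<in> D W) \<and>
     (\<forall>W\<in>V. \<forall>u v v'. (\<forall>Z\<in>scm_pa M W. v Z = v' Z) \<longrightarrow> scm_f M W u v = scm_f M W u v') \<and>
     (\<forall>W\<in>V. \<forall>v\<in>PiE V D. (\<lambda>u. scm_f M W u v) \<in> measurable (scm_P M) (count_space UNIV))"

definition solve :: "'v set \<Rightarrow> ('v \<Rightarrow> 'a set) \<Rightarrow> ('v, 'a, 'u) scm \<Rightarrow> 'v set \<Rightarrow> ('v \<Rightarrow> 'a) \<Rightarrow> 'u \<Rightarrow> ('v \<Rightarrow> 'a)" where
  "solve V D M X x u =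
     (THE v. v \<in> PiE V D \<and> (\<forall>W\<in>V. v W = (if W \<in> X then x W else scm_f M W u v)))"

text \<open>Counterfactual probability P(y1_[x1], y2_[x2], ...); a term is (Y, X, x, y).\<close>
definition cf_prob :: "'v set \<Rightarrow> ('v \<Rightarrow> 'a set) \<Rightarrow> ('v, 'a, 'u) scm \<Rightarrow>
    ('v set \<times> 'v set \<times> ('v \<Rightarrow> 'a) \<times> ('v \<Rightarrow> 'a)) list \<Rightarrow> real" where
  "cf_prob V D M ts = measure (scm_P M)
     {u \<in> space (scm_P M). \<forall>(Y, X, x, y) \<in> set ts. restrict (solve V D M X x u) Y = y}"

definition valid_cf :: "'v set \<Rightarrow> ('v \<Rightarrow> 'a set) \<Rightarrow>
    ('v set \<times> 'v set \<times> ('v \<Rightarrow> 'a) \<times> ('v \<Rightarrow> 'a)) list \<Rightarrow> bool" where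
  "valid_cf V D ts \<longleftrightarrow> (\<forall>(Y, X, x, y) \<in> set ts. Y \<subseteq> V \<and> X \<subseteq> V \<and> x \<in> PiE X D \<and> y \<in> PiE Y D)"

definition L3_equal :: "'v set \<Rightarrow> ('v \<Rightarrow> 'a set) \<Rightarrow> ('v, 'a, 'u) scm \<Rightarrow> ('v, 'a, 'u2) scm \<Rightarrow> bool" where
  "L3_equal V D M M' \<longleftrightarrow> (\<forall>ts. valid_cf V D ts \<longrightarrow> cf_prob V D M ts = cf_prob V D M' ts)"

text \<open>The intervariable clustering is given via the bijection h |-> cl h from V_H
  onto the clusters; the intravariable clustering via the bijection a |-> blk h a
  from the domain of h onto the blocks of the partition of D_(cl h).\<close>

definition inter_clustering :: "'vl set \<Rightarrow> 'vh set \<Rightarrow> ('vh \<Rightarrow> 'vl set) \<Rightarrow> bool" where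
  "inter_clustering VL VH cl \<longleftrightarrow>
     finite VH \<and> (\<forall>h\<in>VH. cl h \<noteq> {} \<and> cl h \<subseteq> VL) \<and>
     (\<forall>h\<in>VH. \<forall>h'\<in>VH. h \<noteq> h' \<longrightarrow> cl h \<inter> cl h' = {})"

definition admissible :: "'vl set \<Rightarrow> ('vl, 'al, 'u) scm \<Rightarrow> 'vh set \<Rightarrow> ('vh \<Rightarrow> 'vl set) \<Rightarrow> bool" where
  "admissible VL M VH cl \<longleftrightarrow>
     (\<forall>h\<in>VH. \<forall>V\<in>cl h. \<forall>W. W \<notin> cl h \<and> (V, W) \<in> (scm_edges VL M)\<^sup>+ \<longrightarrow>
        \<not> (\<exists>Z\<in>cl h. (W, Z) \<in> (scm_edges VL M)\<^sup>+))"

definition intra_clustering :: "'vl set \<Rightarrow> ('vl \<Rightarrow> 'al set) \<Rightarrow> 'vh set \<Rightarrow> ('vh \<Rightarrow> 'ah set) \<Rightarrow>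
    ('vh \<Rightarrow> 'vl set) \<Rightarrow> ('vh \<Rightarrow> 'ah \<Rightarrow> ('vl \<Rightarrow> 'al) set) \<Rightarrow> bool" where
  "intra_clustering VL DL VH DH cl blk \<longleftrightarrow>
     (\<forall>h\<in>VH.
        (\<forall>a\<in>DH h. blk h a \<noteq> {} \<and> blk h a \<subseteq> PiE (cl h) DL) \<and>
        (\<forall>a\<in>DH h. \<forall>a'\<in>DH h. a \<noteq> a' \<longrightarrow> blk h a \<inter> blk h a' = {}) \<and>
        (\<Union>a\<in>DH h. blk h a) = PiE (cl h) DL)"

definition cval :: "('vh \<Rightarrow> 'vl set) \<Rightarrow> ('vh \<Rightarrow> 'ah \<Rightarrow> ('vl \<Rightarrow> 'al) set) \<Rightarrow> ('vh \<Rightarrow> 'ah set) \<Rightarrow>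
    'vh \<Rightarrow> ('vl \<Rightarrow> 'al) \<Rightarrow> 'ah" where
  "cval cl blk DH h c = (THE a. a \<in> DH h \<and> restrict c (cl h) \<in> blk h a)"

definition tauset :: "'vh set \<Rightarrow> ('vh \<Rightarrow> 'vl set) \<Rightarrow> 'vl set \<Rightarrow> 'vh set" where
  "tauset VH cl W = {h \<in> VH. cl h \<subseteq> W}"

definition tauv :: "'vh set \<Rightarrow> ('vh \<Rightarrow> 'vl set) \<Rightarrow> ('vh \<Rightarrow> 'ah \<Rightarrow> ('vl \<Rightarrow> 'al) set) \<Rightarrow>
    ('vh \<Rightarrow> 'ah set) \<Rightarrow> 'vl set \<Rightarrow> ('vl \<Rightarrow> 'al) \<Rightarrow> ('vh \<Rightarrow> 'ah)" where
  "tauv VH cl blk DH W w = (\<lambda>h\<in>tauset VH cl W. cval cl blk DH h w)"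

definition cunion :: "'vh set \<Rightarrow> ('vh \<Rightarrow> 'vl set) \<Rightarrow> 'vl set \<Rightarrow> bool" where
  "cunion VH cl W \<longleftrightarrow> (\<exists>S\<subseteq>VH. W = \<Union>(cl ` S))"

definition L3_tau_consistent :: "'vl set \<Rightarrow> ('vl \<Rightarrow> 'al set) \<Rightarrow> ('vl, 'al, 'ul) scm \<Rightarrow>
    'vh set \<Rightarrow> ('vh \<Rightarrow> 'ah set) \<Rightarrow> ('vh, 'ah, 'uh) scm \<Rightarrow>
    ('vh \<Rightarrow> 'vl set) \<Rightarrow> ('vh \<Rightarrow> 'ah \<Rightarrow> ('vl \<Rightarrow> 'al) set) \<Rightarrow> bool" where
  "L3_tau_consistent VL DL Ml VH DH Mh cl blk \<longleftrightarrow>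
     (\<forall>(ts :: ('vl set \<times> 'vl set \<times> ('vl \<Rightarrow> 'al)) list) (yHs :: ('vh \<Rightarrow> 'ah) list).
        length yHs = length ts \<and>
        (\<forall>(Y, X, x) \<in> set ts. cunion VH cl Y \<and> cunion VH cl X \<and> x \<in> PiE X DL) \<and>
        (\<forall>i<length ts. yHs ! i \<in> PiE (tauset VH cl (fst (ts ! i))) DH)
      \<longrightarrow>
        (\<Sum>ys \<in> {ys. length ys = length ts \<and>
                     (\<forall>i<length ts. ys ! i \<in> PiE (fst (ts ! i)) DL \<and>
                        tauv VH cl blk DH (fst (ts ! i)) (ys ! i) = yHs ! i)}.
           cf_prob VL DL Ml (map2 (\<lambda>(Y, X, x) y. (Y, X, x, y)) ts ys))
        = cf_prob VH DH Mh
            (map2 (\<lambda>(Y, X, x) yH. (tauset VH cl Y, tauset VH cl X, tauv VH cl blk DH X x, yH)) ts yHs))"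

definition Rst :: "'v set \<Rightarrow> ('v \<Rightarrow> 'a set) \<Rightarrow> 'v set \<Rightarrow> ('v \<Rightarrow> 'a) \<Rightarrow> ('v \<Rightarrow> 'a) set" where
  "Rst V D X x = {v \<in> PiE V D. \<forall>W\<in>X. v W = x W}"

definition omega_rel :: "'vl set \<Rightarrow> ('vl \<Rightarrow> 'al set) \<Rightarrow> 'vh set \<Rightarrow> ('vh \<Rightarrow> 'ah set) \<Rightarrow>
    ('vh \<Rightarrow> 'vl set) \<Rightarrow> ('vh \<Rightarrow> 'ah \<Rightarrow> ('vl \<Rightarrow> 'al) set) \<Rightarrow>
    'vl set \<Rightarrow> ('vl \<Rightarrow> 'al) \<Rightarrow> 'vh set \<Rightarrow> ('vh \<Rightarrow> 'ah) \<Rightarrow> bool" where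
  "omega_rel VL DL VH DH cl blk XL xL XH xH \<longleftrightarrow>
     XH \<subseteq> VH \<and> xH \<in> PiE XH DH \<and>
     tauv VH cl blk DH VL ` Rst VL DL XL xL = Rst VH DH XH xH"

definition constructive_tau_abstraction :: "'vl set \<Rightarrow> ('vl \<Rightarrow> 'al set) \<Rightarrow> ('vl, 'al, 'ul) scm \<Rightarrow>
    'vh set \<Rightarrow> ('vh \<Rightarrow> 'ah set) \<Rightarrow> ('vh, 'ah, 'uh) scm \<Rightarrow>
    ('vh \<Rightarrow> 'vl set) \<Rightarrow> ('vh \<Rightarrow> 'ah \<Rightarrow> ('vl \<Rightarrow> 'al) set) \<Rightarrow> bool" where
  "constructive_tau_abstraction VL DL Ml VH DH Mh cl blk \<longleftrightarrow>
     \<comment> \<open>(1) tau surjective\<close>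
     tauv VH cl blk DH VL ` PiE VL DL = PiE VH DH \<and>
     \<comment> \<open>(2) exogenous map and commutation for all allowed low-level interventions\<close>
     (\<exists>tauU. tauU \<in> measurable (scm_P Ml) (scm_P Mh) \<and>
        tauU ` space (scm_P Ml) = space (scm_P Mh) \<and>
        scm_P Mh = distr (scm_P Ml) (scm_P Mh) tauU \<and>
        (\<forall>u\<in>space (scm_P Ml). \<forall>XL xL XH xH.
           cunion VH cl XL \<and> xL \<in> PiE XL DL \<and> omega_rel VL DL VH DH cl blk XL xL XH xH \<longrightarrow>
           tauv VH cl blk DH VL (solve VL DL Ml XL xL u) = solve VH DH Mh XH xH (tauU u))) \<and>
     \<comment> \<open>(3) + strong: omega_tau(I_L) is the set of all interventions on V_H\<close>
     (\<forall>XL xL. cunion VH cl XL \<and> xL \<in> PiE XL DL \<longrightarrow>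
        (\<exists>XH xH. omega_rel VL DL VH DH cl blk XL xL XH xH)) \<and>
     (\<forall>XH xH. XH \<subseteq> VH \<and> xH \<in> PiE XH DH \<longrightarrow>
        (\<exists>XL xL. cunion VH cl XL \<and> xL \<in> PiE XL DL \<and> omega_rel VL DL VH DH cl blk XL xL XH xH)) \<and>
     \<comment> \<open>constructive: tau splits along a partition of V_L (cells C h, plus the rest)\<close>
     (\<exists>(C :: 'vh \<Rightarrow> 'vl set) (g :: 'vh \<Rightarrow> ('vl \<Rightarrow> 'al) \<Rightarrow> 'ah).
        (\<forall>h\<in>VH. C h \<noteq> {} \<and> C h \<subseteq> VL) \<and>
        (\<forall>h\<in>VH. \<forall>h'\<in>VH. h \<noteq> h' \<longrightarrow> C h \<inter> C h' = {}) \<and>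
        (\<forall>h\<in>VH. \<forall>c\<in>PiE (C h) DL. g h c \<in> DH h) \<and>
        (\<forall>vL\<in>PiE VL DL. \<forall>h\<in>VH. tauv VH cl blk DH VL vL h = g h (restrict vL (C h))))"

end

(*
  An exogenous state u matters only through its response function, the tuple of mechanisms
  restricted to the finite endogenous domains. Hence the events of an SCM form a finite algebra,
  and the model is L3-equal to a model on {..<k} whose n-th atom is a representative r n of a
  response class of positive mass w n.

  For the forward direction, consistency applied to the query "all abstracted variables under
  every allowed intervention" says that the low-level profile
  u |-> (tau (M_L[x_L](u)))_(x_L) and the high-level profile u |-> (M_H[omega(x_L)](u))_(x_L)
  have the same law. So every atom of the low-level model has a high-level partner state with
  the same profile; indexing both by the same atoms gives M_L' and M_H' over one exogenous space
  with tau_U = id. They commute with all allowed interventions, and M_H' keeps the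
  counterfactuals of M_H because a high-level intervention is the image of a lifted low-level one,
  so high-level counterfactual events are events of the high-level profile.

  Conversely, for a constructive abstraction the event summed over in the consistency equation
  is the tau_U-preimage of the corresponding high-level event, and P(U_H) is the push-forward of
  P(U_L).
*)

theory Submission
  imports Defs
begin

section \<open>Solutions of submodels\<close>

lemma
  assumes "is_scm V D M"
  shows is_scm_finite: "finite V"
    and is_scm_domain_finite: "W \<in> V \<Longrightarrow> finite (D W)"
    and is_scm_domain_nonempty: "W \<in> V \<Longrightarrow> D W \<noteq> {}"
    and is_scm_parents: "W \<in> V \<Longrightarrow> scm_pa M W \<subseteq> V - {W}"
    and is_scm_acyclic: "acyclic (scm_edges V M)"
    and is_scm_prob_space: "prob_space (scm_P M)"
    and is_scm_mechanism_in_domain: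
      "W \<in> V \<Longrightarrow> u \<in> space (scm_P M) \<Longrightarrow> v \<in> PiE V D \<Longrightarrow> scm_f M W u v \<in> D W"
    and is_scm_mechanism_local:
      "W \<in> V \<Longrightarrow> (\<forall>Z\<in>scm_pa M W. v Z = v' Z) \<Longrightarrow> scm_f M W u v = scm_f M W u v'"
    and is_scm_mechanism_measurable:
      "W \<in> V \<Longrightarrow> v \<in> PiE V D \<Longrightarrow> (\<lambda>u. scm_f M W u v) \<in> measurable (scm_P M) (count_space UNIV)"
  using assms unfolding is_scm_def by blast+

lemma finite_PiE_domains:
  assumes "is_scm V D M" and "X \<subseteq> V"
  shows "finite (PiE X D)"
  using assms is_scm_finite[OF assms(1)] is_scm_domain_finite[OF assms(1)]
  by (intro finite_PiE) (auto intro: finite_subset)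

definition solves :: "'v set \<Rightarrow> ('v \<Rightarrow> 'a set) \<Rightarrow> ('v, 'a, 'u) scm \<Rightarrow> 'v set \<Rightarrow> ('v \<Rightarrow> 'a) \<Rightarrow> 'u \<Rightarrow>
    ('v \<Rightarrow> 'a) \<Rightarrow> bool" where
  "solves V D M X x u v \<longleftrightarrow> v \<in> PiE V D \<and> (\<forall>W\<in>V. v W = (if W \<in> X then x W else scm_f M W u v))"

lemma solve_eq_The: "solve V D M X x u = (THE v. solves V D M X x u v)"
  by (simp add: solve_def solves_def)

lemma wf_scm_edges:
  assumes "is_scm V D M"
  shows "wf (scm_edges V M)"
proof (rule finite_acyclic_wf)
  have "scm_edges V M \<subseteq> V \<times> V"
    using is_scm_parents[OF assms] by (auto simp: scm_edges_def)
  then show "finite (scm_edges V M)"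
    by (rule finite_subset) (simp add: is_scm_finite[OF assms])
qed (rule is_scm_acyclic[OF assms])

lemma solves_unique:
  assumes M: "is_scm V D M" and v1: "solves V D M X x u v1" and v2: "solves V D M X x u v2"
  shows "v1 = v2"
proof -
  have "W \<in> V \<longrightarrow> v1 W = v2 W" for W
  proof (induction W rule: wf_induct[OF wf_scm_edges[OF M]])
    case (1 W)
    show ?case
    proof
      assume W: "W \<in> V"
      have "\<forall>Z\<in>scm_pa M W. v1 Z = v2 Z"
        using 1 W is_scm_parents[OF M W] by (auto simp: scm_edges_def)
      then have "scm_f M W u v1 = scm_f M W u v2"
        by (rule is_scm_mechanism_local[OF M W])
      then show "v1 W = v2 W"
        using v1 v2 W by (simp add: solves_def)
    qed
  qed
  moreover have "v1 \<in> PiE V D" "v2 \<in> PiE V D"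
    using v1 v2 by (simp_all add: solves_def)
  ultimately show ?thesis by (metis PiE_ext)
qed

lemma solves_exists:
  assumes M: "is_scm V D M" and u: "u \<in> space (scm_P M)" and x: "\<And>W. W \<in> X \<Longrightarrow> x W \<in> D W"
  shows "\<exists>v. solves V D M X x u v"
proof -
  let ?r = "scm_edges V M"
  \<comment> \<open>Mechanisms are only known to stay in their domains on \<open>PiE V D\<close>, hence the clamping.\<close>
  define clamp where "clamp g = (\<lambda>Z\<in>V. if g Z \<in> D Z then g Z else (SOME d. d \<in> D Z))"
    for g
  have clamp_PiE: "clamp g \<in> PiE V D" for g
    using is_scm_domain_nonempty[OF M] by (auto simp: clamp_def some_in_eq)
  define sol where "sol = wfrec ?r (\<lambda>g W. if W \<in> X then x W else scm_f M W u (clamp g))"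
  have sol_eq: "sol W = (if W \<in> X then x W else scm_f M W u (clamp (cut sol ?r W)))" for W
    unfolding sol_def by (subst wfrec[OF wf_scm_edges[OF M]]) simp
  have sol_in: "sol W \<in> D W" if "W \<in> V" for W
    using sol_eq[of W] x is_scm_mechanism_in_domain[OF M that u clamp_PiE] by simp
  have "solves V D M X x u (clamp sol)"
    unfolding solves_def
  proof (intro conjI ballI clamp_PiE)
    fix W assume W: "W \<in> V"
    have "\<forall>Z\<in>scm_pa M W. clamp (cut sol ?r W) Z = clamp sol Z"
      using W by (auto simp: clamp_def cut_apply scm_edges_def)
    then have "scm_f M W u (clamp (cut sol ?r W)) = scm_f M W u (clamp sol)"
      by (rule is_scm_mechanism_local[OF M W])
    then show "clamp sol W = (if W \<in> X then x W else scm_f M W u (clamp sol))"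
      using sol_eq[of W] sol_in[OF W] W by (simp add: clamp_def)
  qed
  then show ?thesis by blast
qed

lemma solves_solve:
  assumes M: "is_scm V D M" and u: "u \<in> space (scm_P M)" and x: "x \<in> PiE X D"
  shows "solves V D M X x u (solve V D M X x u)"
proof -
  obtain v where v: "solves V D M X x u v"
    using solves_exists[OF M u] x by blast
  show ?thesis
    unfolding solve_eq_The by (rule theI[of _ v]) (use v solves_unique[OF M] in blast)+
qed

lemma solve_PiE:
  assumes "is_scm V D M" and "u \<in> space (scm_P M)" and "x \<in> PiE X D"
  shows "solve V D M X x u \<in> PiE V D"
  using solves_solve[OF assms] by (simp add: solves_def)

lemma Rst_eq_forces_value:
  assumes eq: "Rst V D X x = Rst V D X' x'" and ne: "Rst V D X x \<noteq> {}"
    and h: "h \<in> X" "h \<notin> X'" "h \<in> V" and a: "a \<in> D h"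
  shows "a = x h"
proof -
  obtain r where r: "r \<in> Rst V D X' x'" using ne eq by blast
  then have "r(h := a) \<in> Rst V D X' x'"
    using h a by (auto simp: Rst_def PiE_def Pi_def extensional_def)
  then have "r(h := a) \<in> Rst V D X x" using eq by simp
  then show ?thesis using h(1) by (auto simp: Rst_def)
qed

lemma Rst_eq_agree:
  assumes eq: "Rst V D X x = Rst V D X' x'" and ne: "Rst V D X x \<noteq> {}"
    and h: "h \<in> X" "h \<in> X'"
  shows "x h = x' h"
proof -
  obtain r where "r \<in> Rst V D X x" using ne by blast
  moreover from this have "r \<in> Rst V D X' x'" using eq by simp
  ultimately show ?thesis using h by (auto simp: Rst_def)
qed

lemma solve_Rst_cong:
  assumes M: "is_scm V D M" and u: "u \<in> space (scm_P M)"
    and eq: "Rst V D X x = Rst V D X' x'" and ne: "Rst V D X x \<noteq> {}"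
  shows "solve V D M X x u = solve V D M X' x' u"
proof -
  have ne': "Rst V D X' x' \<noteq> {}" using ne eq by simp
  have "(v W = (if W \<in> X then x W else scm_f M W u v)) \<longleftrightarrow> (v W = (if W \<in> X' then x' W else scm_f M W u v))"
    if v: "v \<in> PiE V D" and W: "W \<in> V" for v W
  proof -
    have vW: "v W \<in> D W" and fW: "scm_f M W u v \<in> D W"
      using v W is_scm_mechanism_in_domain[OF M W u v] by auto
    consider "W \<in> X" "W \<in> X'" | "W \<in> X" "W \<notin> X'" | "W \<notin> X" "W \<in> X'" | "W \<notin> X" "W \<notin> X'"
      by blast
    then show ?thesis
    proof cases
      case 1 then show ?thesis using Rst_eq_agree[OF eq ne] by simp
    next
      case 2
      then have "v W = x W" "scm_f M W u v = x W"
        using Rst_eq_forces_value[OF eq ne 2 W] vW fW by blast+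
      with 2 show ?thesis by simp
    next
      case 3
      then have "v W = x' W" "scm_f M W u v = x' W"
        using Rst_eq_forces_value[OF eq[symmetric] ne' 3(2,1) W] vW fW by blast+
      with 3 show ?thesis by simp
    qed simp
  qed
  then have "solves V D M X x u = solves V D M X' x' u"
    unfolding solves_def by (intro ext) blast
  then show ?thesis by (simp add: solve_eq_The)
qed

lemma Rst_nonempty:
  assumes "\<And>W. W \<in> V \<Longrightarrow> D W \<noteq> {}" and "X \<subseteq> V" and "x \<in> PiE X D"
  shows "Rst V D X x \<noteq> {}"
proof -
  have "(\<lambda>W\<in>V. if W \<in> X then x W else (SOME d. d \<in> D W)) \<in> Rst V D X x"
    using assms by (auto simp: Rst_def some_in_eq)
  then show ?thesis by blast
qed

section \<open>Response functions\<close>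

definition response :: "'v set \<Rightarrow> ('v \<Rightarrow> 'a set) \<Rightarrow> ('v, 'a, 'u) scm \<Rightarrow> 'u \<Rightarrow> 'v \<Rightarrow> ('v \<Rightarrow> 'a) \<Rightarrow> 'a" where
  "response V D M u = (\<lambda>W\<in>V. \<lambda>v\<in>PiE V D. scm_f M W u v)"

definition response_determined :: "'v set \<Rightarrow> ('v \<Rightarrow> 'a set) \<Rightarrow> ('v, 'a, 'u) scm \<Rightarrow> ('u \<Rightarrow> 'b) \<Rightarrow> bool" where
  "response_determined V D M g \<longleftrightarrow>
     (\<forall>u1\<in>space (scm_P M). \<forall>u2\<in>space (scm_P M). response V D M u1 = response V D M u2 \<longrightarrow> g u1 = g u2)"

lemma response_determinedD:
  "response_determined V D M g \<Longrightarrow> u1 \<in> space (scm_P M) \<Longrightarrow> u2 \<in> space (scm_P M) \<Longrightarrow>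
    response V D M u1 = response V D M u2 \<Longrightarrow> g u1 = g u2"
  unfolding response_determined_def by blast

lemma response_determined_comp:
  "response_determined V D M g \<Longrightarrow> response_determined V D M (\<lambda>u. f (g u))"
  unfolding response_determined_def by metis

lemma response_eq_iff:
  "response V D M u1 = response V D M u2 \<longleftrightarrow> (\<forall>W\<in>V. \<forall>v\<in>PiE V D. scm_f M W u1 v = scm_f M W u2 v)"
proof
  assume eq: "response V D M u1 = response V D M u2"
  show "\<forall>W\<in>V. \<forall>v\<in>PiE V D. scm_f M W u1 v = scm_f M W u2 v"
  proof (intro ballI)
    fix W v assume "W \<in> V" "v \<in> PiE V D"
    then show "scm_f M W u1 v = scm_f M W u2 v"
      using fun_cong[OF fun_cong[OF eq, of W], of v] by (simp add: response_def)
  qed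
next
  assume "\<forall>W\<in>V. \<forall>v\<in>PiE V D. scm_f M W u1 v = scm_f M W u2 v"
  then show "response V D M u1 = response V D M u2"
    unfolding response_def by (intro restrict_ext) simp
qed

lemma solves_response_cong:
  assumes "response V D M u1 = response V D M u2"
  shows "solves V D M X x u1 = solves V D M X x u2"
proof -
  have "scm_f M W u1 v = scm_f M W u2 v" if "W \<in> V" "v \<in> PiE V D" for W v
    using assms that unfolding response_eq_iff by blast
  then show ?thesis
    unfolding solves_def by (intro ext) auto
qed

lemma solve_response_cong:
  assumes "response V D M u1 = response V D M u2"
  shows "solve V D M X x u1 = solve V D M X x u2"
  unfolding solve_eq_The solves_response_cong[OF assms] ..

lemma response_determined_solutions: "response_determined V D M (\<lambda>u. F (\<lambda>X x. solve V D M X x u))"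
  unfolding response_determined_def
proof (intro ballI impI)
  fix u1 u2 assume "response V D M u1 = response V D M u2"
  then have "solve V D M X x u1 = solve V D M X x u2" for X x
    by (rule solve_response_cong)
  then show "F (\<lambda>X x. solve V D M X x u1) = F (\<lambda>X x. solve V D M X x u2)" by simp
qed

lemma finite_response_image:
  assumes M: "is_scm V D M"
  shows "finite (response V D M ` space (scm_P M))"
proof (rule finite_subset)
  show "response V D M ` space (scm_P M) \<subseteq> PiE V (\<lambda>W. PiE (PiE V D) (\<lambda>_. D W))"
    by (intro image_subsetI) (simp add: response_def restrict_PiE_iff is_scm_mechanism_in_domain[OF M])
  show "finite (PiE V (\<lambda>W. PiE (PiE V D) (\<lambda>_. D W)))"
    using M by (intro finite_PiE finite_PiE_domains) (auto simp: is_scm_finite is_scm_domain_finite)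
qed

lemma sets_response_fiber:
  assumes M: "is_scm V D M" and u0: "u0 \<in> space (scm_P M)"
  shows "{u \<in> space (scm_P M). response V D M u = response V D M u0} \<in> sets (scm_P M)"
proof -
  have mechanism_fiber: "{u \<in> space (scm_P M). scm_f M W u v = c} \<in> sets (scm_P M)"
    if "W \<in> V" "v \<in> PiE V D" for W v c
    using measurable_sets[OF is_scm_mechanism_measurable[OF M that], of "{c}"]
    by (simp add: vimage_def Int_def conj_commute)
  show ?thesis
    unfolding response_eq_iff
  proof (rule sets.sets_Collect_finite_All[OF _ is_scm_finite[OF M]])
    fix W assume "W \<in> V"
    then show "{u \<in> space (scm_P M). \<forall>v\<in>PiE V D. scm_f M W u v = scm_f M W u0 v} \<in> sets (scm_P M)"
      by (intro sets.sets_Collect_finite_All mechanism_fiber finite_PiE_domains[OF M subset_refl])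
  qed
qed

lemma sets_Collect_response_determined:
  assumes M: "is_scm V D M" and P: "response_determined V D M P"
  shows "{u \<in> space (scm_P M). P u} \<in> sets (scm_P M)"
proof -
  let ?fiber = "\<lambda>u0. {u \<in> space (scm_P M). response V D M u = response V D M u0}"
  have "{u \<in> space (scm_P M). P u} = (\<Union>u0\<in>{u \<in> space (scm_P M). P u}. ?fiber u0)"
    using P by (auto simp: response_determined_def)
  also have "\<dots> = (\<Union>\<phi>\<in>response V D M ` {u \<in> space (scm_P M). P u}.
      {u \<in> space (scm_P M). response V D M u = \<phi>})"
    by blast
  also have "\<dots> \<in> sets (scm_P M)"
  proof (intro sets.finite_UN ballI)
    show "finite (response V D M ` {u \<in> space (scm_P M). P u})"
      by (rule finite_subset[OF _ finite_response_image[OF M]]) blast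
    fix \<phi> assume "\<phi> \<in> response V D M ` {u \<in> space (scm_P M). P u}"
    then show "{u \<in> space (scm_P M). response V D M u = \<phi>} \<in> sets (scm_P M)"
      using sets_response_fiber[OF M] by auto
  qed
  finally show ?thesis .
qed

lemma finite_image_response_determined:
  assumes M: "is_scm V D M" and g: "response_determined V D M g"
  shows "finite (g ` space (scm_P M))"
proof -
  let ?rep = "inv_into (space (scm_P M)) (response V D M)"
  have "g u = g (?rep (response V D M u))" if u: "u \<in> space (scm_P M)" for u
    using u by (intro response_determinedD[OF g]) (simp_all add: inv_into_into f_inv_into_f)
  then have "g ` space (scm_P M) \<subseteq> (\<lambda>\<phi>. g (?rep \<phi>)) ` response V D M ` space (scm_P M)"
    by auto
  then show ?thesis
    by (rule finite_subset) (intro finite_imageI finite_response_image[OF M])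
qed

lemma measure_response_determined_fibers:
  assumes M: "is_scm V D M" and g: "response_determined V D M g"
    and A: "finite A" "g ` space (scm_P M) \<subseteq> A"
  shows "measure (scm_P M) {u \<in> space (scm_P M). Q (g u)} =
    (\<Sum>r\<in>{r\<in>A. Q r}. measure (scm_P M) {u \<in> space (scm_P M). g u = r})"
proof -
  interpret prob_space "scm_P M" by (rule is_scm_prob_space[OF M])
  have fibers: "{u \<in> space (scm_P M). g u = r} \<in> events" for r
    by (rule sets_Collect_response_determined[OF M response_determined_comp[OF g]])
  have eq: "{u \<in> space (scm_P M). Q (g u)} = (\<Union>r\<in>{r\<in>A. Q r}. {u \<in> space (scm_P M). g u = r})"
    using A(2) by auto
  show ?thesis
    unfolding eq using A(1) fibers
    by (intro finite_measure_finite_Union) (auto simp: disjoint_family_on_def)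
qed

lemma measure_response_determined_in:
  assumes M: "is_scm V D M" and g: "response_determined V D M g" and B: "finite B"
  shows "measure (scm_P M) {u \<in> space (scm_P M). g u \<in> B} =
    (\<Sum>b\<in>B. measure (scm_P M) {u \<in> space (scm_P M). g u = b})"
proof -
  let ?A = "B \<union> g ` space (scm_P M)"
  have "finite ?A"
    using B finite_image_response_determined[OF M g] by simp
  then have "measure (scm_P M) {u \<in> space (scm_P M). g u \<in> B} =
      (\<Sum>b\<in>{b \<in> ?A. b \<in> B}. measure (scm_P M) {u \<in> space (scm_P M). g u = b})"
    by (rule measure_response_determined_fibers[OF M g]) blast
  moreover have "{b \<in> ?A. b \<in> B} = B" by blast
  ultimately show ?thesis by (simp only:)
qed

lemma measure_distr_Collect:
  assumes f: "f \<in> measurable M N" and N: "N = distr M N f" and E: "{w \<in> space N. E w} \<in> sets N"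
  shows "measure M {u \<in> space M. E (f u)} = measure N {w \<in> space N. E w}"
proof -
  from E have "measure N {w \<in> space N. E w} = measure M (f -` {w \<in> space N. E w} \<inter> space M)"
    by (subst N) (rule measure_distr[OF f])
  also have "f -` {w \<in> space N. E w} \<inter> space M = {u \<in> space M. E (f u)}"
    using measurable_space[OF f] by auto
  finally show ?thesis by simp
qed

lemma response_atoms:
  assumes M: "is_scm V D M"
  shows "\<exists>(k :: nat) (r :: nat \<Rightarrow> 'u) (w :: nat \<Rightarrow> real).
    (\<forall>n<k. r n \<in> space (scm_P M) \<and> 0 < w n) \<and>
    (\<forall>P. response_determined V D M P \<longrightarrow>
      measure (scm_P M) {u \<in> space (scm_P M). P u} = (\<Sum>n<k. if P (r n) then w n else 0))"
proof -
  let ?R = "response V D M ` space (scm_P M)"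
  define mass where "mass \<phi> = measure (scm_P M) {u \<in> space (scm_P M). response V D M u = \<phi>}" for \<phi>
  define \<Phi> where "\<Phi> = {\<phi> \<in> ?R. mass \<phi> \<noteq> 0}"
  define rep where "rep = inv_into (space (scm_P M)) (response V D M)"
  define e where "e = from_nat_into \<Phi>"
  have fin: "finite ?R" by (rule finite_response_image[OF M])
  have e: "bij_betw e {..<card \<Phi>} \<Phi>"
    unfolding e_def using fin by (intro bij_betw_from_nat_into_finite) (simp add: \<Phi>_def)
  have rep: "rep \<phi> \<in> space (scm_P M) \<and> response V D M (rep \<phi>) = \<phi>" if "\<phi> \<in> ?R" for \<phi>
    using that by (simp add: rep_def inv_into_into f_inv_into_f)
  show ?thesis
  proof (intro exI[of _ "card \<Phi>"] exI[of _ "\<lambda>n. rep (e n)"] exI[of _ "\<lambda>n. mass (e n)"] conjI allI impI)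
    fix n assume "n < card \<Phi>"
    then have n: "e n \<in> \<Phi>" using bij_betw_apply[OF e] by simp
    then show "rep (e n) \<in> space (scm_P M)" using rep by (simp add: \<Phi>_def)
    show "0 < mass (e n)" using n by (simp add: \<Phi>_def mass_def order_less_le)
  next
    fix P :: "'u \<Rightarrow> bool" assume P: "response_determined V D M P"
    have "P (rep (response V D M u)) = P u" if u: "u \<in> space (scm_P M)" for u
      using rep[of "response V D M u"] u by (intro response_determinedD[OF P]) simp_all
    then have "{u \<in> space (scm_P M). P u} = {u \<in> space (scm_P M). P (rep (response V D M u))}"
      by auto
    then have "measure (scm_P M) {u \<in> space (scm_P M). P u} =
        measure (scm_P M) {u \<in> space (scm_P M). P (rep (response V D M u))}"
      by simp
    also have "\<dots> = (\<Sum>\<phi>\<in>{\<phi> \<in> ?R. P (rep \<phi>)}. mass \<phi>)"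
      unfolding mass_def
      by (rule measure_response_determined_fibers[OF M _ fin subset_refl,
            where Q="\<lambda>\<phi>. P (rep \<phi>)"])
        (simp add: response_determined_def)
    also have "\<dots> = (\<Sum>\<phi>\<in>?R. if P (rep \<phi>) then mass \<phi> else 0)"
      by (rule sum.inter_filter[OF fin])
    also have "\<dots> = (\<Sum>\<phi>\<in>\<Phi>. if P (rep \<phi>) then mass \<phi> else 0)"
      by (rule sum.mono_neutral_right[OF fin]) (auto simp: \<Phi>_def)
    also have "\<dots> = (\<Sum>n<card \<Phi>. if P (rep (e n)) then mass (e n) else 0)"
      using sum.reindex_bij_betw[OF e, of "\<lambda>\<phi>. if P (rep \<phi>) then mass \<phi> else 0"] by simp
    finally show "measure (scm_P M) {u \<in> space (scm_P M). P u} =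
        (\<Sum>n<card \<Phi>. if P (rep (e n)) then mass (e n) else 0)" .
  qed
qed

definition cf_holds :: "'v set \<Rightarrow> ('v \<Rightarrow> 'a set) \<Rightarrow> ('v, 'a, 'u) scm \<Rightarrow>
    ('v set \<times> 'v set \<times> ('v \<Rightarrow> 'a) \<times> ('v \<Rightarrow> 'a)) list \<Rightarrow> 'u \<Rightarrow> bool" where
  "cf_holds V D M ts u \<longleftrightarrow> (\<forall>(Y, X, x, y) \<in> set ts. restrict (solve V D M X x u) Y = y)"

lemma cf_prob_eq_measure: "cf_prob V D M ts = measure (scm_P M) {u \<in> space (scm_P M). cf_holds V D M ts u}"
  by (simp add: cf_prob_def cf_holds_def)

lemma response_determined_cf_holds: "response_determined V D M (cf_holds V D M ts)"
  unfolding cf_holds_def[abs_def]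
  by (rule response_determined_solutions[where F="\<lambda>s. \<forall>(Y, X, x, y) \<in> set ts. restrict (s X x) Y = y"])

lemma ball_set_map2:
  "length ys = length xs \<Longrightarrow> (\<forall>t\<in>set (map2 f xs ys). P t) \<longleftrightarrow> (\<forall>i<length xs. P (f (xs ! i) (ys ! i)))"
  by (auto simp: set_zip)

lemma finite_lists_nth:
  assumes "\<And>i. i < n \<Longrightarrow> finite (A i)"
  shows "finite {ys. length ys = n \<and> (\<forall>i<n. ys ! i \<in> A i)}"
proof (rule finite_subset)
  show "{ys. length ys = n \<and> (\<forall>i<n. ys ! i \<in> A i)} \<subseteq> {ys. set ys \<subseteq> (\<Union>i<n. A i) \<and> length ys = n}"
    by (auto simp: in_set_conv_nth) blast
  show "finite {ys. set ys \<subseteq> (\<Union>i<n. A i) \<and> length ys = n}"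
    using assms by (intro finite_lists_length_eq) auto
qed

lemma valid_cf_map2:
  "length ys = length ts \<Longrightarrow> valid_cf V D (map2 F ts ys) \<longleftrightarrow>
    (\<forall>i<length ts. case F (ts ! i) (ys ! i) of (Y, X, x, y) \<Rightarrow> Y \<subseteq> V \<and> X \<subseteq> V \<and> x \<in> PiE X D \<and> y \<in> PiE Y D)"
  unfolding valid_cf_def by (rule ball_set_map2)

lemma cf_holds_map2:
  "length ys = length ts \<Longrightarrow> cf_holds V D M (map2 F ts ys) u \<longleftrightarrow>
    (\<forall>i<length ts. case F (ts ! i) (ys ! i) of (Y, X, x, y) \<Rightarrow> restrict (solve V D M X x u) Y = y)"
  unfolding cf_holds_def by (rule ball_set_map2)

lemma restrict_eq_extensional_iff:
  assumes "g \<in> extensional A"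
  shows "restrict f A = g \<longleftrightarrow> (\<forall>x\<in>A. f x = g x)"
  using assms by (metis extensional_restrict restrict_apply' restrict_ext)

section \<open>Finite models on the natural numbers\<close>

definition atomic_scm :: "('v, 'a, 'u) scm \<Rightarrow> nat \<Rightarrow> (nat \<Rightarrow> 'u) \<Rightarrow> (nat \<Rightarrow> real) \<Rightarrow> ('v, 'a, nat) scm" where
  "atomic_scm M k r w =
     \<lparr>scm_pa = scm_pa M, scm_f = (\<lambda>W n. scm_f M W (r n)),
      scm_P = point_measure {..<k} (\<lambda>n. ennreal (w n))\<rparr>"

lemma solve_atomic_scm: "solve V D (atomic_scm M k r w) X x n = solve V D M X x (r n)"
  by (simp add: solve_def atomic_scm_def)

lemma space_atomic_scm: "space (scm_P (atomic_scm M k r w)) = {..<k}"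
  by (simp add: atomic_scm_def space_point_measure)

lemma measure_atomic_scm:
  assumes w: "\<And>n. n < k \<Longrightarrow> 0 \<le> w n"
  shows "measure (scm_P (atomic_scm M k r w)) {n \<in> space (scm_P (atomic_scm M k r w)). P n} =
    (\<Sum>n<k. if P n then w n else 0)"
proof -
  have "emeasure (point_measure {..<k} (\<lambda>n. ennreal (w n))) {n \<in> {..<k}. P n} =
      (\<Sum>n\<in>{n \<in> {..<k}. P n}. ennreal (w n))"
    by (rule emeasure_point_measure_finite) auto
  also have "\<dots> = ennreal (\<Sum>n\<in>{n \<in> {..<k}. P n}. w n)"
    using w by (intro sum_ennreal) auto
  moreover have "0 \<le> (\<Sum>n\<in>{n \<in> {..<k}. P n}. w n)"
    using w by (intro sum_nonneg) auto
  ultimately have "measure (scm_P (atomic_scm M k r w)) {n \<in> {..<k}. P n} = (\<Sum>n\<in>{n \<in> {..<k}. P n}. w n)"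
    by (simp add: measure_def atomic_scm_def)
  then show ?thesis
    by (simp only: space_atomic_scm sum.inter_filter[OF finite_lessThan])
qed

lemma is_scm_atomic_scm:
  assumes M: "is_scm V D M" and r: "\<And>n. n < k \<Longrightarrow> r n \<in> space (scm_P M)"
    and w: "\<And>n. n < k \<Longrightarrow> 0 \<le> w n" and total: "(\<Sum>n<k. w n) = 1"
  shows "is_scm V D (atomic_scm M k r w)"
proof -
  have "prob_space (point_measure {..<k} (\<lambda>n. ennreal (w n)))"
  proof (rule prob_space_point_measure)
    have "(\<Sum>n<k. ennreal (w n)) = ennreal (\<Sum>n<k. w n)"
      using w by (intro sum_ennreal) simp
    then show "(\<Sum>n\<in>{..<k}. ennreal (w n)) = 1" using total by simp
  qed simp_all
  moreover have "scm_edges V (atomic_scm M k r w) = scm_edges V M"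
    by (simp add: scm_edges_def atomic_scm_def)
  ultimately show ?thesis
    using M r unfolding is_scm_def by (simp add: atomic_scm_def space_point_measure)
qed

lemma cf_holds_atomic_scm: "cf_holds V D (atomic_scm M k r w) ts n = cf_holds V D M ts (r n)"
  by (simp add: cf_holds_def solve_atomic_scm)

lemma L3_equal_atomic_scm:
  assumes w: "\<And>n. n < k \<Longrightarrow> 0 \<le> w n"
    and cf: "\<And>ts. valid_cf V D ts \<Longrightarrow> cf_prob V D M ts = (\<Sum>n<k. if cf_holds V D M ts (r n) then w n else 0)"
  shows "L3_equal V D (atomic_scm M k r w) M"
  unfolding L3_equal_def
proof (intro allI impI)
  fix ts assume "valid_cf V D ts"
  moreover have "measure (scm_P (atomic_scm M k r w))
      {n \<in> space (scm_P (atomic_scm M k r w)). cf_holds V D M ts (r n)} =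
      (\<Sum>n<k. if cf_holds V D M ts (r n) then w n else 0)"
    by (rule measure_atomic_scm[OF w])
  ultimately show "cf_prob V D (atomic_scm M k r w) ts = cf_prob V D M ts"
    by (simp add: cf_prob_eq_measure[of V D "atomic_scm M k r w"] cf_holds_atomic_scm cf)
qed

lemma cval_cong: "restrict c (cl h) = restrict c' (cl h) \<Longrightarrow> cval cl blk DH h c = cval cl blk DH h c'"
  unfolding cval_def by simp

locale tau_clustering =
  fixes VL :: "'vl set" and DL :: "'vl \<Rightarrow> 'al set" and VH :: "'vh set" and DH :: "'vh \<Rightarrow> 'ah set"
    and cl :: "'vh \<Rightarrow> 'vl set" and blk :: "'vh \<Rightarrow> 'ah \<Rightarrow> ('vl \<Rightarrow> 'al) set"
  assumes inter: "inter_clustering VL VH cl"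
    and intra: "intra_clustering VL DL VH DH cl blk"
    and DL_nonempty: "\<And>W. W \<in> VL \<Longrightarrow> DL W \<noteq> {}"
begin

abbreviation tau :: "'vl set \<Rightarrow> ('vl \<Rightarrow> 'al) \<Rightarrow> 'vh \<Rightarrow> 'ah" where
  "tau \<equiv> tauv VH cl blk DH"

abbreviation tau_vars :: "'vl set \<Rightarrow> 'vh set" where
  "tau_vars \<equiv> tauset VH cl"

abbreviation cluster_union :: "'vl set \<Rightarrow> bool" where
  "cluster_union \<equiv> cunion VH cl"

lemma cl_subset: "h \<in> VH \<Longrightarrow> cl h \<subseteq> VL"
  using inter by (auto simp: inter_clustering_def)

lemma cl_nonempty: "h \<in> VH \<Longrightarrow> cl h \<noteq> {}"
  using inter by (auto simp: inter_clustering_def)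

lemma cl_disjoint: "h \<in> VH \<Longrightarrow> h' \<in> VH \<Longrightarrow> W \<in> cl h \<Longrightarrow> W \<in> cl h' \<Longrightarrow> h = h'"
  using inter unfolding inter_clustering_def by blast

lemma blk_nonempty: "h \<in> VH \<Longrightarrow> a \<in> DH h \<Longrightarrow> blk h a \<noteq> {}"
  using intra by (auto simp: intra_clustering_def)

lemma blk_subset: "h \<in> VH \<Longrightarrow> a \<in> DH h \<Longrightarrow> blk h a \<subseteq> PiE (cl h) DL"
  using intra by (auto simp: intra_clustering_def)

lemma blk_disjoint:
  "h \<in> VH \<Longrightarrow> a \<in> DH h \<Longrightarrow> a' \<in> DH h \<Longrightarrow> c \<in> blk h a \<Longrightarrow> c \<in> blk h a' \<Longrightarrow> a = a'"
  using intra unfolding intra_clustering_def by blast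

lemma blk_cover:
  assumes "h \<in> VH" "c \<in> PiE (cl h) DL"
  shows "\<exists>a\<in>DH h. c \<in> blk h a"
proof -
  have "(\<Union>a\<in>DH h. blk h a) = PiE (cl h) DL"
    using intra assms(1) by (simp add: intra_clustering_def)
  then show ?thesis using assms(2) by blast
qed

lemma cluster_union_subset: "cluster_union X \<Longrightarrow> X \<subseteq> VL"
  using cl_subset unfolding cunion_def by blast

lemma tau_vars_VL: "tau_vars VL = VH"
  using cl_subset by (auto simp: tauset_def)

lemma tau_vars_Union:
  assumes S: "S \<subseteq> VH"
  shows "tau_vars (\<Union>(cl ` S)) = S"
proof
  show "S \<subseteq> tau_vars (\<Union>(cl ` S))" using S by (auto simp: tauset_def)
  show "tau_vars (\<Union>(cl ` S)) \<subseteq> S"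
  proof
    fix h assume "h \<in> tau_vars (\<Union>(cl ` S))"
    then have h: "h \<in> VH" "cl h \<subseteq> \<Union>(cl ` S)" by (auto simp: tauset_def)
    obtain W where W: "W \<in> cl h" using cl_nonempty[OF h(1)] by blast
    then obtain h' where "h' \<in> S" "W \<in> cl h'" using h(2) by blast
    then show "h \<in> S" using cl_disjoint[OF h(1) _ W] S by blast
  qed
qed

lemma cval_eqI:
  assumes "h \<in> VH" "a \<in> DH h" "restrict c (cl h) \<in> blk h a"
  shows "cval cl blk DH h c = a"
  unfolding cval_def
proof (rule the_equality)
  fix a' assume "a' \<in> DH h \<and> restrict c (cl h) \<in> blk h a'"
  then show "a' = a" using assms blk_disjoint by blast
qed (use assms in simp)

lemma cval_in:
  assumes h: "h \<in> VH" and W: "cl h \<subseteq> W" and c: "c \<in> PiE W DL"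
  shows "cval cl blk DH h c \<in> DH h"
proof -
  have "restrict c (cl h) \<in> PiE (cl h) DL"
    using W c by (auto simp: PiE_def Pi_def)
  then obtain a where "a \<in> DH h" "restrict c (cl h) \<in> blk h a"
    using blk_cover[OF h] by blast
  then show ?thesis using cval_eqI[OF h] by simp
qed

lemma tau_apply: "h \<in> tau_vars W \<Longrightarrow> tau W w h = cval cl blk DH h w"
  by (simp add: tauv_def)

lemma tau_VL_apply: "h \<in> VH \<Longrightarrow> tau VL v h = cval cl blk DH h v"
  by (simp add: tau_apply tau_vars_VL)

lemma tau_Union_apply: "S \<subseteq> VH \<Longrightarrow> h \<in> S \<Longrightarrow> tau (\<Union>(cl ` S)) w h = cval cl blk DH h w"
  by (simp add: tau_apply tau_vars_Union)

lemma tau_PiE: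
  assumes "w \<in> PiE W DL"
  shows "tau W w \<in> PiE (tau_vars W) DH"
proof -
  have "cval cl blk DH h w \<in> DH h" if "h \<in> tau_vars W" for h
    using that assms by (intro cval_in[of h W]) (auto simp: tauset_def)
  then show ?thesis by (simp add: tauv_def restrict_PiE_iff)
qed

lemma tau_restrict: "tau Y (restrict s Y) = restrict (tau VL s) (tau_vars Y)"
proof (rule ext)
  fix h
  show "tau Y (restrict s Y) h = restrict (tau VL s) (tau_vars Y) h"
  proof (cases "h \<in> tau_vars Y")
    case True
    then have h: "h \<in> VH" by (simp add: tauset_def)
    have "tau Y (restrict s Y) h = cval cl blk DH h (restrict s Y)"
      using True by (rule tau_apply)
    also have "\<dots> = cval cl blk DH h s"
      using True by (intro cval_cong ext) (auto simp: tauset_def)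
    also have "\<dots> = tau VL s h"
      using h by (simp add: tau_VL_apply)
    finally show ?thesis using True by simp
  qed (simp add: tauv_def)
qed

definition owner :: "'vl \<Rightarrow> 'vh" where
  "owner W = (THE h. h \<in> VH \<and> W \<in> cl h)"

definition lift :: "'vh set \<Rightarrow> ('vh \<Rightarrow> 'ah) \<Rightarrow> 'vl \<Rightarrow> 'al" where
  "lift T z = (\<lambda>W\<in>\<Union>(cl ` T). (SOME c. c \<in> blk (owner W) (z (owner W))) W)"

lemma owner_eq: "h \<in> VH \<Longrightarrow> W \<in> cl h \<Longrightarrow> owner W = h"
  unfolding owner_def by (rule the_equality) (auto dest: cl_disjoint)

lemma restrict_lift:
  assumes T: "T \<subseteq> VH" and h: "h \<in> T" and z: "z h \<in> DH h"
  shows "restrict (lift T z) (cl h) \<in> blk h (z h)"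
proof -
  let ?c = "SOME c. c \<in> blk h (z h)"
  have hVH: "h \<in> VH" using T h by blast
  have c: "?c \<in> blk h (z h)"
    using blk_nonempty[OF hVH z] by (simp add: some_in_eq)
  then have "?c \<in> extensional (cl h)"
    using blk_subset[OF hVH z] by (auto simp: PiE_def)
  then have "restrict (lift T z) (cl h) = ?c"
    using h owner_eq[OF hVH] by (auto simp: lift_def extensional_def)
  with c show ?thesis by simp
qed

lemma cval_lift:
  assumes "T \<subseteq> VH" "h \<in> T" "z h \<in> DH h"
  shows "cval cl blk DH h (lift T z) = z h"
  using assms restrict_lift[of T h z, OF assms] by (intro cval_eqI) auto

lemma lift_PiE:
  assumes T: "T \<subseteq> VH" and z: "z \<in> PiE T DH"
  shows "lift T z \<in> PiE (\<Union>(cl ` T)) DL"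
proof -
  have "lift T z W \<in> DL W" if h: "h \<in> T" and W: "W \<in> cl h" for h W
  proof -
    have "z h \<in> DH h" using z h by (simp add: PiE_iff)
    then have "restrict (lift T z) (cl h) \<in> PiE (cl h) DL"
      using restrict_lift[of T h z] blk_subset[of h "z h"] T h by blast
    then show ?thesis using W by (simp add: PiE_iff)
  qed
  moreover have "lift T z \<in> extensional (\<Union>(cl ` T))"
    by (simp add: lift_def)
  ultimately show ?thesis by (auto simp: PiE_iff)
qed

lemma tau_lift:
  assumes T: "T \<subseteq> VH" and z: "z \<in> PiE T DH"
  shows "tau (\<Union>(cl ` T)) (lift T z) = z"
proof (rule ext)
  fix h
  show "tau (\<Union>(cl ` T)) (lift T z) h = z h"
  proof (cases "h \<in> T")
    case True
    then show ?thesis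
      using T z by (simp add: tau_apply tau_vars_Union cval_lift PiE_iff)
  next
    case False
    then show ?thesis
      using T z by (simp add: tauv_def tau_vars_Union PiE_iff extensional_def)
  qed
qed

lemma tau_image_Rst_subset:
  assumes S: "S \<subseteq> VH"
  shows "tau VL ` Rst VL DL (\<Union>(cl ` S)) xL \<subseteq> Rst VH DH S (tau (\<Union>(cl ` S)) xL)"
proof
  fix z assume "z \<in> tau VL ` Rst VL DL (\<Union>(cl ` S)) xL"
  then obtain v where v: "v \<in> PiE VL DL" "\<forall>W\<in>\<Union>(cl ` S). v W = xL W" and z: "z = tau VL v"
    by (auto simp: Rst_def)
  have "z h = tau (\<Union>(cl ` S)) xL h" if h: "h \<in> S" for h
  proof -
    have "cval cl blk DH h v = cval cl blk DH h xL"
      using v(2) h by (intro cval_cong) (auto simp: restrict_def)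
    then show ?thesis using z h S by (auto simp: tau_VL_apply tau_Union_apply)
  qed
  moreover have "z \<in> PiE VH DH"
    using tau_PiE[OF v(1)] z by (simp add: tau_vars_VL)
  ultimately show "z \<in> Rst VH DH S (tau (\<Union>(cl ` S)) xL)" by (auto simp: Rst_def)
qed

lemma Rst_subset_tau_image:
  assumes S: "S \<subseteq> VH" and xL: "xL \<in> PiE (\<Union>(cl ` S)) DL"
  shows "Rst VH DH S (tau (\<Union>(cl ` S)) xL) \<subseteq> tau VL ` Rst VL DL (\<Union>(cl ` S)) xL"
proof
  let ?X = "\<Union>(cl ` S)"
  fix z assume "z \<in> Rst VH DH S (tau ?X xL)"
  then have z: "z \<in> PiE VH DH" "\<And>h. h \<in> S \<Longrightarrow> z h = tau ?X xL h"
    by (auto simp: Rst_def)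
  \<comment> \<open>Outside the intervened clusters, use representatives of the blocks prescribed by z.\<close>
  define v where "v = (\<lambda>W\<in>VL. if W \<in> ?X then xL W
    else if W \<in> \<Union>(cl ` VH) then lift VH z W else (SOME d. d \<in> DL W))"
  have "v \<in> PiE VL DL"
    using xL lift_PiE[OF subset_refl z(1)] DL_nonempty by (auto simp: v_def PiE_iff some_in_eq)
  then have v_Rst: "v \<in> Rst VL DL ?X xL"
    using S cl_subset by (auto simp: Rst_def v_def)
  have "tau VL v h = z h" for h
  proof (cases "h \<in> VH")
    case False
    then show ?thesis using z(1) by (simp add: tauv_def tau_vars_VL PiE_iff extensional_def)
  next
    case h: True
    show ?thesis
    proof (cases "h \<in> S")
      case True
      have "cval cl blk DH h v = cval cl blk DH h xL"
        using True cl_subset[OF h] by (intro cval_cong ext) (auto simp: v_def)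
      then show ?thesis using h True z(2)[OF True] S by (simp add: tau_VL_apply tau_Union_apply)
    next
      case False
      have "W \<notin> ?X" if "W \<in> cl h" for W
        using that False S cl_disjoint[OF h] by blast
      then have "cval cl blk DH h v = cval cl blk DH h (lift VH z)"
        using cl_subset[OF h] h by (intro cval_cong ext) (auto simp: v_def)
      also have "\<dots> = z h"
        using h z(1) by (intro cval_lift) (auto simp: PiE_iff)
      finally show ?thesis using h by (simp add: tau_VL_apply)
    qed
  qed
  then have "z = tau VL v" by auto
  then show "z \<in> tau VL ` Rst VL DL ?X xL" using v_Rst by blast
qed

lemma tau_image_Rst:
  "S \<subseteq> VH \<Longrightarrow> xL \<in> PiE (\<Union>(cl ` S)) DL \<Longrightarrow>
    tau VL ` Rst VL DL (\<Union>(cl ` S)) xL = Rst VH DH S (tau (\<Union>(cl ` S)) xL)"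
  by (intro equalityI tau_image_Rst_subset Rst_subset_tau_image)

lemma tau_image_PiE: "tau VL ` PiE VL DL = PiE VH DH"
  using tau_image_Rst[of "{}" "\<lambda>_. undefined"] by (simp add: Rst_def)

lemma omega_rel_tau:
  assumes X: "cluster_union X" and x: "x \<in> PiE X DL"
  shows "omega_rel VL DL VH DH cl blk X x (tau_vars X) (tau X x)"
proof -
  obtain S where S: "S \<subseteq> VH" "X = \<Union>(cl ` S)" using X unfolding cunion_def by blast
  have "tau_vars X = S" using S by (simp add: tau_vars_Union)
  then show ?thesis
    unfolding omega_rel_def using tau_PiE[OF x] tau_image_Rst[OF S(1)] x S(2) S(1) by simp
qed

lemma omega_rel_lift:
  assumes T: "T \<subseteq> VH" and z: "z \<in> PiE T DH"
  shows "omega_rel VL DL VH DH cl blk (\<Union>(cl ` T)) (lift T z) T z"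
proof -
  have "cluster_union (\<Union>(cl ` T))" using T unfolding cunion_def by blast
  with lift_PiE[OF T z] show ?thesis
    using omega_rel_tau tau_lift[OF T z] tau_vars_Union[OF T] by metis
qed

lemma sum_cf_prob_eq_measure_tau:
  assumes M: "is_scm VL DL M"
    and ts: "\<forall>(Y, X, x) \<in> set ts. cluster_union Y \<and> cluster_union X \<and> x \<in> PiE X DL"
  shows "(\<Sum>ys \<in> {ys. length ys = length ts \<and>
            (\<forall>i<length ts. ys ! i \<in> PiE (fst (ts ! i)) DL \<and> tau (fst (ts ! i)) (ys ! i) = yHs ! i)}.
          cf_prob VL DL M (map2 (\<lambda>(Y, X, x) y. (Y, X, x, y)) ts ys))
    = measure (scm_P M) {u \<in> space (scm_P M). \<forall>i<length ts.
        case ts ! i of (Y, X, x) \<Rightarrow> restrict (tau VL (solve VL DL M X x u)) (tau_vars Y) = yHs ! i}"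
    (is "(\<Sum>ys\<in>?YS. _) = measure _ {u \<in> _. ?E u}")
proof -
  \<comment> \<open>The sum ranges over the possible values of \<open>obs\<close>.\<close>
  define obs where "obs u = map (\<lambda>(Y, X, x). restrict (solve VL DL M X x u) Y) ts" for u
  have ts_Y: "fst (ts ! i) \<subseteq> VL" and ts_x: "snd (snd (ts ! i)) \<in> PiE (fst (snd (ts ! i))) DL"
    if "i < length ts" for i
    using ts nth_mem[OF that] cluster_union_subset by (auto simp: split_beta)
  have obs_nth: "obs u ! i = restrict (solve VL DL M (fst (snd (ts ! i))) (snd (snd (ts ! i))) u) (fst (ts ! i))"
    if "i < length ts" for u i
    using that by (simp add: obs_def split_beta)
  have obs_length: "length (obs u) = length ts" for u
    by (simp add: obs_def)
  have obs: "response_determined VL DL M obs"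
    unfolding obs_def[abs_def]
    by (rule response_determined_solutions[where F="\<lambda>s. map (\<lambda>(Y, X, x). restrict (s X x) Y) ts"])
  have "finite (PiE (fst (ts ! i)) DL)" if "i < length ts" for i
    using finite_PiE_domains[OF M ts_Y[OF that]] .
  then have "finite ?YS"
    by (rule finite_subset[OF _ finite_lists_nth, rotated]) auto
  have "cf_prob VL DL M (map2 (\<lambda>(Y, X, x) y. (Y, X, x, y)) ts ys) =
      measure (scm_P M) {u \<in> space (scm_P M). obs u = ys}" if "ys \<in> ?YS" for ys
  proof -
    have "cf_holds VL DL M (map2 (\<lambda>(Y, X, x) y. (Y, X, x, y)) ts ys) u \<longleftrightarrow> obs u = ys" for u
      using that by (auto simp: cf_holds_map2 list_eq_iff_nth_eq obs_nth obs_length split_beta)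
    then show ?thesis by (simp add: cf_prob_eq_measure)
  qed
  then have "(\<Sum>ys\<in>?YS. cf_prob VL DL M (map2 (\<lambda>(Y, X, x) y. (Y, X, x, y)) ts ys)) =
      (\<Sum>ys\<in>?YS. measure (scm_P M) {u \<in> space (scm_P M). obs u = ys})"
    by (rule sum.cong[OF refl])
  also have "\<dots> = measure (scm_P M) {u \<in> space (scm_P M). obs u \<in> ?YS}"
    by (rule measure_response_determined_in[OF M obs \<open>finite ?YS\<close>, symmetric])
  also have "{u \<in> space (scm_P M). obs u \<in> ?YS} = {u \<in> space (scm_P M). ?E u}"
  proof (rule Collect_cong, rule conj_cong[OF refl])
    fix u assume u: "u \<in> space (scm_P M)"
    have "obs u ! i \<in> PiE (fst (ts ! i)) DL" if "i < length ts" for i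
      using solve_PiE[OF M u ts_x[OF that]] ts_Y[OF that] that by (auto simp: obs_nth PiE_iff)
    moreover have "tau (fst (ts ! i)) (obs u ! i) =
        restrict (tau VL (solve VL DL M (fst (snd (ts ! i))) (snd (snd (ts ! i))) u)) (tau_vars (fst (ts ! i)))"
      if "i < length ts" for i
      using that by (simp add: obs_nth tau_restrict)
    ultimately show "obs u \<in> ?YS \<longleftrightarrow> ?E u"
      by (simp add: obs_length split_beta)
  qed
  finally show ?thesis .
qed

lemma cf_prob_tau_queries:
  "length yHs = length ts \<Longrightarrow>
   cf_prob VH DH Mh (map2 (\<lambda>(Y, X, x) yH. (tau_vars Y, tau_vars X, tau X x, yH)) ts yHs) =
   measure (scm_P Mh) {u \<in> space (scm_P Mh). \<forall>i<length ts.
     case ts ! i of (Y, X, x) \<Rightarrow> restrict (solve VH DH Mh (tau_vars X) (tau X x) u) (tau_vars Y) = yHs ! i}"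
  by (simp add: cf_prob_eq_measure cf_holds_map2 split_beta)

section \<open>A constructive abstraction is consistent\<close>

lemma constructive_abstraction_imp_L3_tau_consistent:
  assumes Ml: "is_scm VL DL Ml" and Mh: "is_scm VH DH Mh"
    and abstraction: "constructive_tau_abstraction VL DL Ml VH DH Mh cl blk"
  shows "L3_tau_consistent VL DL Ml VH DH Mh cl blk"
  unfolding L3_tau_consistent_def
proof (intro allI impI, elim conjE)
  fix ts :: "('vl set \<times> 'vl set \<times> ('vl \<Rightarrow> 'al)) list" and yHs :: "('vh \<Rightarrow> 'ah) list"
  assume len: "length yHs = length ts"
    and ts: "\<forall>(Y, X, x) \<in> set ts. cluster_union Y \<and> cluster_union X \<and> x \<in> PiE X DL"
  from abstraction[unfolded constructive_tau_abstraction_def, THEN conjunct2, THEN conjunct1]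
  obtain tauU where tauU: "tauU \<in> measurable (scm_P Ml) (scm_P Mh)"
    and distr: "scm_P Mh = distr (scm_P Ml) (scm_P Mh) tauU"
    and commutes: "\<forall>u\<in>space (scm_P Ml). \<forall>XL xL XH xH.
      cluster_union XL \<and> xL \<in> PiE XL DL \<and> omega_rel VL DL VH DH cl blk XL xL XH xH \<longrightarrow>
      tau VL (solve VL DL Ml XL xL u) = solve VH DH Mh XH xH (tauU u)"
    by (elim exE conjE) (rule that)
  define E where "E w \<longleftrightarrow> (\<forall>i<length ts. case ts ! i of (Y, X, x) \<Rightarrow>
      restrict (solve VH DH Mh (tau_vars X) (tau X x) w) (tau_vars Y) = yHs ! i)" for w
  have "tau VL (solve VL DL Ml X x u) = solve VH DH Mh (tau_vars X) (tau X x) (tauU u)"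
    if u: "u \<in> space (scm_P Ml)" and X: "cluster_union X" and x: "x \<in> PiE X DL" for u X x
    using commutes u X x omega_rel_tau[OF X x] by blast
  moreover have "cluster_union (fst (snd (ts ! i))) \<and> snd (snd (ts ! i)) \<in> PiE (fst (snd (ts ! i))) DL"
    if "i < length ts" for i
    using ts nth_mem[OF that] by (auto simp: split_beta)
  ultimately have "{u \<in> space (scm_P Ml). \<forall>i<length ts. case ts ! i of (Y, X, x) \<Rightarrow>
        restrict (tau VL (solve VL DL Ml X x u)) (tau_vars Y) = yHs ! i} =
      {u \<in> space (scm_P Ml). E (tauU u)}"
    unfolding E_def by (auto simp: split_beta)
  moreover have "response_determined VH DH Mh E"
    unfolding E_def[abs_def]
    by (rule response_determined_solutions[where F="\<lambda>s. \<forall>i<length ts. case ts ! i of (Y, X, x) \<Rightarrow>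
        restrict (s (tau_vars X) (tau X x)) (tau_vars Y) = yHs ! i"])
  then have "measure (scm_P Ml) {u \<in> space (scm_P Ml). E (tauU u)} =
      measure (scm_P Mh) {w \<in> space (scm_P Mh). E w}"
    by (intro measure_distr_Collect[OF tauU distr] sets_Collect_response_determined[OF Mh])
  ultimately show "(\<Sum>ys \<in> {ys. length ys = length ts \<and>
         (\<forall>i<length ts. ys ! i \<in> PiE (fst (ts ! i)) DL \<and> tau (fst (ts ! i)) (ys ! i) = yHs ! i)}.
       cf_prob VL DL Ml (map2 (\<lambda>(Y, X, x) y. (Y, X, x, y)) ts ys)) =
     cf_prob VH DH Mh (map2 (\<lambda>(Y, X, x) yH. (tau_vars Y, tau_vars X, tau X x, yH)) ts yHs)"
    by (simp add: sum_cf_prob_eq_measure_tau[OF Ml ts] cf_prob_tau_queries[OF len] E_def)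
qed

lemma L3_tau_consistent_L3_equal_cong:
  assumes EL: "L3_equal VL DL Ml' Ml" and EH: "L3_equal VH DH Mh' Mh"
    and consistent: "L3_tau_consistent VL DL Ml' VH DH Mh' cl blk"
  shows "L3_tau_consistent VL DL Ml VH DH Mh cl blk"
  unfolding L3_tau_consistent_def
proof (intro allI impI, elim conjE)
  fix ts :: "('vl set \<times> 'vl set \<times> ('vl \<Rightarrow> 'al)) list" and yHs :: "('vh \<Rightarrow> 'ah) list"
  assume len: "length yHs = length ts"
    and ts: "\<forall>(Y, X, x) \<in> set ts. cluster_union Y \<and> cluster_union X \<and> x \<in> PiE X DL"
    and yHs: "\<forall>i<length ts. yHs ! i \<in> PiE (tau_vars (fst (ts ! i))) DH"
  have ts_i: "fst (ts ! i) \<subseteq> VL \<and> fst (snd (ts ! i)) \<subseteq> VL \<and> cluster_union (fst (snd (ts ! i))) \<and>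
      snd (snd (ts ! i)) \<in> PiE (fst (snd (ts ! i))) DL" if "i < length ts" for i
    using ts nth_mem[OF that] cluster_union_subset by (auto simp: split_beta)
  let ?YS = "{ys. length ys = length ts \<and>
    (\<forall>i<length ts. ys ! i \<in> PiE (fst (ts ! i)) DL \<and> tau (fst (ts ! i)) (ys ! i) = yHs ! i)}"
  have "cf_prob VL DL Ml (map2 (\<lambda>(Y, X, x) y. (Y, X, x, y)) ts ys) =
      cf_prob VL DL Ml' (map2 (\<lambda>(Y, X, x) y. (Y, X, x, y)) ts ys)" if "ys \<in> ?YS" for ys
  proof -
    have "valid_cf VL DL (map2 (\<lambda>(Y, X, x) y. (Y, X, x, y)) ts ys)"
      using that ts_i by (simp add: valid_cf_map2 split_beta)
    then show ?thesis using EL by (simp add: L3_equal_def)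
  qed
  moreover have "valid_cf VH DH (map2 (\<lambda>(Y, X, x) yH. (tau_vars Y, tau_vars X, tau X x, yH)) ts yHs)"
    using len yHs ts_i by (simp add: valid_cf_map2 split_beta tau_PiE) (auto simp: tauset_def)
  then have "cf_prob VH DH Mh (map2 (\<lambda>(Y, X, x) yH. (tau_vars Y, tau_vars X, tau X x, yH)) ts yHs) =
      cf_prob VH DH Mh' (map2 (\<lambda>(Y, X, x) yH. (tau_vars Y, tau_vars X, tau X x, yH)) ts yHs)"
    using EH by (simp add: L3_equal_def)
  ultimately show "(\<Sum>ys \<in> ?YS. cf_prob VL DL Ml (map2 (\<lambda>(Y, X, x) y. (Y, X, x, y)) ts ys)) =
     cf_prob VH DH Mh (map2 (\<lambda>(Y, X, x) yH. (tau_vars Y, tau_vars X, tau X x, yH)) ts yHs)"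
    using consistent len ts yHs unfolding L3_tau_consistent_def by simp
qed

section \<open>Profiles: the abstracted outcomes of all allowed interventions\<close>

definition allowed_interventions :: "('vl set \<times> ('vl \<Rightarrow> 'al)) set" where
  "allowed_interventions = {(X, x). cluster_union X \<and> x \<in> PiE X DL}"

definition low_profile :: "('vl, 'al, 'u) scm \<Rightarrow> 'u \<Rightarrow> 'vl set \<times> ('vl \<Rightarrow> 'al) \<Rightarrow> 'vh \<Rightarrow> 'ah" where
  "low_profile M u = restrict (\<lambda>(X, x). tau VL (solve VL DL M X x u)) allowed_interventions"

definition high_profile :: "('vh, 'ah, 'u) scm \<Rightarrow> 'u \<Rightarrow> 'vl set \<times> ('vl \<Rightarrow> 'al) \<Rightarrow> 'vh \<Rightarrow> 'ah" where
  "high_profile M u = restrict (\<lambda>(X, x). solve VH DH M (tau_vars X) (tau X x) u) allowed_interventions"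

lemma finite_allowed_interventions:
  assumes "is_scm VL DL M"
  shows "finite allowed_interventions"
proof (rule finite_subset)
  show "allowed_interventions \<subseteq> Sigma (Pow VL) (\<lambda>X. PiE X DL)"
    using cluster_union_subset by (auto simp: allowed_interventions_def)
  show "finite (Sigma (Pow VL) (\<lambda>X. PiE X DL))"
    using finite_PiE_domains[OF assms] is_scm_finite[OF assms] by auto
qed

lemma low_profile_PiE:
  assumes "is_scm VL DL M" and "u \<in> space (scm_P M)"
  shows "low_profile M u \<in> PiE allowed_interventions (\<lambda>_. PiE VH DH)"
  using tau_PiE[OF solve_PiE[OF assms]] by (auto simp: low_profile_def allowed_interventions_def tau_vars_VL)

lemma high_profile_PiE:
  assumes "is_scm VH DH M" and "u \<in> space (scm_P M)"
  shows "high_profile M u \<in> PiE allowed_interventions (\<lambda>_. PiE VH DH)"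
  using solve_PiE[OF assms tau_PiE] by (auto simp: high_profile_def allowed_interventions_def)

lemma low_profile_eq_iff:
  "\<psi> \<in> extensional allowed_interventions \<Longrightarrow>
    low_profile M u = \<psi> \<longleftrightarrow> (\<forall>(X, x) \<in> allowed_interventions. tau VL (solve VL DL M X x u) = \<psi> (X, x))"
  unfolding low_profile_def by (simp add: restrict_eq_extensional_iff split_beta)

lemma high_profile_eq_iff:
  "\<psi> \<in> extensional allowed_interventions \<Longrightarrow>
    high_profile M u = \<psi> \<longleftrightarrow>
      (\<forall>(X, x) \<in> allowed_interventions. solve VH DH M (tau_vars X) (tau X x) u = \<psi> (X, x))"
  unfolding high_profile_def by (simp add: restrict_eq_extensional_iff split_beta)

lemma response_determined_low_profile: "response_determined VL DL M (low_profile M)"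
  unfolding low_profile_def[abs_def]
  by (rule response_determined_solutions[where F="\<lambda>s. restrict (\<lambda>(X, x). tau VL (s X x)) allowed_interventions"])

lemma response_determined_high_profile: "response_determined VH DH M (high_profile M)"
  unfolding high_profile_def[abs_def]
  by (rule response_determined_solutions[where F="\<lambda>s. restrict (\<lambda>(X, x). s (tau_vars X) (tau X x)) allowed_interventions"])

lemma low_profile_atomic_scm: "low_profile (atomic_scm M k r w) n = low_profile M (r n)"
  by (simp add: low_profile_def solve_atomic_scm)

lemma high_profile_atomic_scm: "high_profile (atomic_scm M k r w) n = high_profile M (r n)"
  by (simp add: high_profile_def solve_atomic_scm)

lemma high_profile_lift:
  assumes X: "X \<subseteq> VH" and x: "x \<in> PiE X DH"
  shows "high_profile M u (\<Union>(cl ` X), lift X x) = solve VH DH M X x u"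
proof -
  have "cluster_union (\<Union>(cl ` X))" using X unfolding cunion_def by blast
  then show ?thesis
    using lift_PiE[OF X x]
    by (simp add: high_profile_def allowed_interventions_def tau_lift[OF X x] tau_vars_Union[OF X])
qed

lemma cf_holds_high_profile:
  assumes "valid_cf VH DH ts"
  shows "cf_holds VH DH M ts u \<longleftrightarrow>
    (\<forall>(Y, X, x, y) \<in> set ts. restrict (high_profile M u (\<Union>(cl ` X), lift X x)) Y = y)"
proof -
  have "high_profile M u (\<Union>(cl ` X), lift X x) = solve VH DH M X x u" if "(Y, X, x, y) \<in> set ts" for Y X x y
    using assms that by (intro high_profile_lift) (auto simp: valid_cf_def)
  then show ?thesis
    unfolding cf_holds_def by (intro ball_cong[OF refl]) (auto split: prod.splits)
qed

lemma measure_low_profile_eq_high_profile: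
  assumes Ml: "is_scm VL DL Ml" and Mh: "is_scm VH DH Mh"
    and consistent: "L3_tau_consistent VL DL Ml VH DH Mh cl blk"
    and \<psi>: "\<psi> \<in> PiE allowed_interventions (\<lambda>_. PiE VH DH)"
  shows "measure (scm_P Ml) {u \<in> space (scm_P Ml). low_profile Ml u = \<psi>} =
    measure (scm_P Mh) {u \<in> space (scm_P Mh). high_profile Mh u = \<psi>}"
proof -
  obtain ps where ps: "set ps = allowed_interventions"
    using finite_list[OF finite_allowed_interventions[OF Ml]] by blast
  have \<psi>_ext: "\<psi> \<in> extensional allowed_interventions"
    using \<psi> by (simp add: PiE_iff)
  define Y where "Y = \<Union>(cl ` VH)"
  have Y: "cluster_union Y" "tau_vars Y = VH"
    unfolding Y_def cunion_def by (auto simp: tau_vars_Union)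
  \<comment> \<open>Query the whole abstracted state under every allowed intervention at once.\<close>
  define ts where "ts = map (\<lambda>(X, x). (Y, X, x)) ps"
  define yHs where "yHs = map \<psi> ps"
  have len: "length yHs = length ts" by (simp add: ts_def yHs_def)
  have ts: "\<forall>(Y, X, x) \<in> set ts. cluster_union Y \<and> cluster_union X \<and> x \<in> PiE X DL"
    using ps Y by (auto simp: ts_def allowed_interventions_def)
  have all_ps: "(\<forall>i<length ts. P (ps ! i)) \<longleftrightarrow> (\<forall>p\<in>allowed_interventions. P p)" for P
    unfolding ps[symmetric] by (simp add: ts_def all_set_conv_all_nth)
  have ps_i: "ps ! i \<in> allowed_interventions" if "i < length ps" for i
    using ps nth_mem[OF that] by blast
  then have "\<forall>i<length ts. yHs ! i \<in> PiE (tau_vars (fst (ts ! i))) DH"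
    using \<psi> Y by (auto simp: ts_def yHs_def split_beta)
  with ts len consistent have "(\<Sum>ys \<in> {ys. length ys = length ts \<and>
         (\<forall>i<length ts. ys ! i \<in> PiE (fst (ts ! i)) DL \<and> tau (fst (ts ! i)) (ys ! i) = yHs ! i)}.
       cf_prob VL DL Ml (map2 (\<lambda>(Y, X, x) y. (Y, X, x, y)) ts ys)) =
     cf_prob VH DH Mh (map2 (\<lambda>(Y, X, x) yH. (tau_vars Y, tau_vars X, tau X x, yH)) ts yHs)"
    unfolding L3_tau_consistent_def by blast
  moreover have "{u \<in> space (scm_P Ml). low_profile Ml u = \<psi>} = {u \<in> space (scm_P Ml). \<forall>i<length ts.
      case ts ! i of (Y, X, x) \<Rightarrow> restrict (tau VL (solve VL DL Ml X x u)) (tau_vars Y) = yHs ! i}"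
  proof (rule Collect_cong, rule conj_cong[OF refl])
    fix u
    have "restrict (tau VL s) VH = tau VL s" for s
      by (simp add: tauv_def tau_vars_VL)
    with all_ps[of "\<lambda>(X, x). tau VL (solve VL DL Ml X x u) = \<psi> (X, x)"]
    show "low_profile Ml u = \<psi> \<longleftrightarrow> (\<forall>i<length ts. case ts ! i of (Y, X, x) \<Rightarrow>
        restrict (tau VL (solve VL DL Ml X x u)) (tau_vars Y) = yHs ! i)"
      by (simp add: low_profile_eq_iff[OF \<psi>_ext] ts_def yHs_def Y split_beta)
  qed
  moreover have "{u \<in> space (scm_P Mh). high_profile Mh u = \<psi>} = {u \<in> space (scm_P Mh). \<forall>i<length ts.
      case ts ! i of (Y, X, x) \<Rightarrow> restrict (solve VH DH Mh (tau_vars X) (tau X x) u) (tau_vars Y) = yHs ! i}"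
  proof (rule Collect_cong, rule conj_cong[OF refl])
    fix u assume u: "u \<in> space (scm_P Mh)"
    have "restrict (solve VH DH Mh (tau_vars (fst p)) (tau (fst p) (snd p)) u) VH =
        solve VH DH Mh (tau_vars (fst p)) (tau (fst p) (snd p)) u" if "p \<in> allowed_interventions" for p
      using solve_PiE[OF Mh u tau_PiE, of "snd p" "fst p"] that by (simp add: allowed_interventions_def split_beta)
    with ps_i all_ps[of "\<lambda>(X, x). solve VH DH Mh (tau_vars X) (tau X x) u = \<psi> (X, x)"]
    show "high_profile Mh u = \<psi> \<longleftrightarrow> (\<forall>i<length ts. case ts ! i of (Y, X, x) \<Rightarrow>
        restrict (solve VH DH Mh (tau_vars X) (tau X x) u) (tau_vars Y) = yHs ! i)"
      by (simp add: high_profile_eq_iff[OF \<psi>_ext] ts_def yHs_def Y split_beta)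
  qed
  ultimately show ?thesis
    by (simp only: sum_cf_prob_eq_measure_tau[OF Ml ts] cf_prob_tau_queries[OF len])
qed

lemma measure_low_profile_event_eq_high_profile:
  assumes Ml: "is_scm VL DL Ml" and Mh: "is_scm VH DH Mh"
    and consistent: "L3_tau_consistent VL DL Ml VH DH Mh cl blk"
  shows "measure (scm_P Ml) {u \<in> space (scm_P Ml). Q (low_profile Ml u)} =
    measure (scm_P Mh) {u \<in> space (scm_P Mh). Q (high_profile Mh u)}"
proof -
  let ?\<Psi> = "PiE allowed_interventions (\<lambda>_. PiE VH DH)"
  have fin: "finite ?\<Psi>"
    using finite_allowed_interventions[OF Ml] finite_PiE_domains[OF Mh subset_refl] by (rule finite_PiE)
  have "measure (scm_P Ml) {u \<in> space (scm_P Ml). Q (low_profile Ml u)} =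
      (\<Sum>\<psi>\<in>{\<psi> \<in> ?\<Psi>. Q \<psi>}. measure (scm_P Ml) {u \<in> space (scm_P Ml). low_profile Ml u = \<psi>})"
    using low_profile_PiE[OF Ml]
    by (intro measure_response_determined_fibers[OF Ml response_determined_low_profile fin]) blast
  also have "\<dots> = (\<Sum>\<psi>\<in>{\<psi> \<in> ?\<Psi>. Q \<psi>}. measure (scm_P Mh) {u \<in> space (scm_P Mh). high_profile Mh u = \<psi>})"
    using measure_low_profile_eq_high_profile[OF Ml Mh consistent] by (intro sum.cong) auto
  also have "\<dots> = measure (scm_P Mh) {u \<in> space (scm_P Mh). Q (high_profile Mh u)}"
    using high_profile_PiE[OF Mh]
    by (intro measure_response_determined_fibers[OF Mh response_determined_high_profile fin, symmetric]) blast
  finally show ?thesis .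
qed

lemma cf_prob_high_eq_measure_low_profile:
  assumes Ml: "is_scm VL DL Ml" and Mh: "is_scm VH DH Mh"
    and consistent: "L3_tau_consistent VL DL Ml VH DH Mh cl blk" and ts: "valid_cf VH DH ts"
  shows "cf_prob VH DH Mh ts = measure (scm_P Ml) {u \<in> space (scm_P Ml).
    \<forall>(Y, X, x, y) \<in> set ts. restrict (low_profile Ml u (\<Union>(cl ` X), lift X x)) Y = y}"
  using measure_low_profile_event_eq_high_profile[OF Ml Mh consistent,
      of "\<lambda>\<psi>. \<forall>(Y, X, x, y) \<in> set ts. restrict (\<psi> (\<Union>(cl ` X), lift X x)) Y = y"]
  by (simp add: cf_prob_eq_measure cf_holds_high_profile[OF ts])

lemma high_profile_exists:
  assumes Ml: "is_scm VL DL Ml" and Mh: "is_scm VH DH Mh"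
    and consistent: "L3_tau_consistent VL DL Ml VH DH Mh cl blk"
    and u: "u \<in> space (scm_P Ml)"
    and pos: "0 < measure (scm_P Ml) {u' \<in> space (scm_P Ml). low_profile Ml u' = low_profile Ml u}"
  shows "\<exists>v\<in>space (scm_P Mh). high_profile Mh v = low_profile Ml u"
proof -
  have "measure (scm_P Mh) {v \<in> space (scm_P Mh). high_profile Mh v = low_profile Ml u} \<noteq> 0"
    using pos measure_low_profile_eq_high_profile[OF Ml Mh consistent low_profile_PiE[OF Ml u]] by simp
  then have "{v \<in> space (scm_P Mh). high_profile Mh v = low_profile Ml u} \<noteq> {}"
    by (intro notI) simp
  then show ?thesis by blast
qed

section \<open>Consistency yields a constructive abstraction\<close>

lemma tau_solve_eq_solve_omega_rel:
  assumes Mh: "is_scm VH DH Mh" and u: "u \<in> space (scm_P Mh)"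
    and agree: "low_profile Ml u = high_profile Mh u"
    and XL: "cluster_union XL" and xL: "xL \<in> PiE XL DL"
    and \<omega>: "omega_rel VL DL VH DH cl blk XL xL XH xH"
  shows "tau VL (solve VL DL Ml XL xL u) = solve VH DH Mh XH xH u"
proof -
  have \<omega>_tau: "omega_rel VL DL VH DH cl blk XL xL (tau_vars XL) (tau XL xL)"
    by (rule omega_rel_tau[OF XL xL])
  have "Rst VL DL XL xL \<noteq> {}"
    using DL_nonempty cluster_union_subset[OF XL] xL by (rule Rst_nonempty)
  then have Rst_ne: "Rst VH DH (tau_vars XL) (tau XL xL) \<noteq> {}"
    using \<omega>_tau by (auto simp: omega_rel_def)
  have Rst_eq: "Rst VH DH (tau_vars XL) (tau XL xL) = Rst VH DH XH xH"
    using \<omega> \<omega>_tau by (simp add: omega_rel_def)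
  have "tau VL (solve VL DL Ml XL xL u) = low_profile Ml u (XL, xL)"
    using XL xL by (simp add: low_profile_def allowed_interventions_def)
  also have "\<dots> = solve VH DH Mh (tau_vars XL) (tau XL xL) u"
    using XL xL by (simp add: agree high_profile_def allowed_interventions_def)
  also have "\<dots> = solve VH DH Mh XH xH u"
    by (rule solve_Rst_cong[OF Mh u Rst_eq Rst_ne])
  finally show ?thesis .
qed

lemma tau_constructive:
  "\<exists>(C :: 'vh \<Rightarrow> 'vl set) (g :: 'vh \<Rightarrow> ('vl \<Rightarrow> 'al) \<Rightarrow> 'ah).
      (\<forall>h\<in>VH. C h \<noteq> {} \<and> C h \<subseteq> VL) \<and>
      (\<forall>h\<in>VH. \<forall>h'\<in>VH. h \<noteq> h' \<longrightarrow> C h \<inter> C h' = {}) \<and>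
      (\<forall>h\<in>VH. \<forall>c\<in>PiE (C h) DL. g h c \<in> DH h) \<and>
      (\<forall>vL\<in>PiE VL DL. \<forall>h\<in>VH. tau VL vL h = g h (restrict vL (C h)))"
proof (intro exI conjI ballI impI)
  fix h assume h: "h \<in> VH"
  show "cl h \<noteq> {}" "cl h \<subseteq> VL" using cl_nonempty[OF h] cl_subset[OF h] .
  show "cval cl blk DH h c \<in> DH h" if "c \<in> PiE (cl h) DL" for c
    using h that by (rule cval_in[OF _ subset_refl])
  show "tau VL vL h = cval cl blk DH h (restrict vL (cl h))" for vL
    using h by (simp add: tau_VL_apply) (rule cval_cong, simp)
  show "cl h \<inter> cl h' = {}" if "h' \<in> VH" "h \<noteq> h'" for h'
    using cl_disjoint[OF h that(1)] that(2) by blast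
qed

lemma constructive_abstraction_if_profiles_agree:
  assumes Mh: "is_scm VH DH Mh" and same_space: "scm_P Mh = scm_P Ml"
    and agree: "\<And>u. u \<in> space (scm_P Ml) \<Longrightarrow> low_profile Ml u = high_profile Mh u"
  shows "constructive_tau_abstraction VL DL Ml VH DH Mh cl blk"
  unfolding constructive_tau_abstraction_def
proof (intro conjI tau_image_PiE tau_constructive)
  show "\<exists>tauU. tauU \<in> measurable (scm_P Ml) (scm_P Mh) \<and>
      tauU ` space (scm_P Ml) = space (scm_P Mh) \<and>
      scm_P Mh = distr (scm_P Ml) (scm_P Mh) tauU \<and>
      (\<forall>u\<in>space (scm_P Ml). \<forall>XL xL XH xH.
         cluster_union XL \<and> xL \<in> PiE XL DL \<and> omega_rel VL DL VH DH cl blk XL xL XH xH \<longrightarrow>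
         tau VL (solve VL DL Ml XL xL u) = solve VH DH Mh XH xH (tauU u))"
  proof (intro exI[of _ "\<lambda>u. u"] conjI ballI allI impI; (elim conjE)?)
    show "(\<lambda>u. u) \<in> measurable (scm_P Ml) (scm_P Mh)"
      "(\<lambda>u. u) ` space (scm_P Ml) = space (scm_P Mh)"
      "scm_P Mh = distr (scm_P Ml) (scm_P Mh) (\<lambda>u. u)"
      unfolding same_space by simp_all
    fix u XL xL XH xH
    assume "u \<in> space (scm_P Ml)" "cluster_union XL" "xL \<in> PiE XL DL"
      "omega_rel VL DL VH DH cl blk XL xL XH xH"
    with agree show "tau VL (solve VL DL Ml XL xL u) = solve VH DH Mh XH xH u"
      by (intro tau_solve_eq_solve_omega_rel[OF Mh]) (simp_all add: same_space)
  qed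
  show "\<forall>XL xL. cluster_union XL \<and> xL \<in> PiE XL DL \<longrightarrow> (\<exists>XH xH. omega_rel VL DL VH DH cl blk XL xL XH xH)"
    using omega_rel_tau by blast
  show "\<forall>XH xH. XH \<subseteq> VH \<and> xH \<in> PiE XH DH \<longrightarrow>
      (\<exists>XL xL. cluster_union XL \<and> xL \<in> PiE XL DL \<and> omega_rel VL DL VH DH cl blk XL xL XH xH)"
  proof (intro allI impI, elim conjE)
    fix XH xH assume XH: "XH \<subseteq> VH" and xH: "xH \<in> PiE XH DH"
    have "cluster_union (\<Union>(cl ` XH))" using XH unfolding cunion_def by blast
    then show "\<exists>XL xL. cluster_union XL \<and> xL \<in> PiE XL DL \<and> omega_rel VL DL VH DH cl blk XL xL XH xH"
      using lift_PiE[OF XH xH] omega_rel_lift[OF XH xH] by blast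
  qed
qed

lemma L3_tau_consistent_imp_constructive_abstraction:
  assumes Ml: "is_scm VL DL Ml" and Mh: "is_scm VH DH Mh"
    and consistent: "L3_tau_consistent VL DL Ml VH DH Mh cl blk"
  shows "\<exists>(Ml' :: ('vl, 'al, nat) scm) (Mh' :: ('vh, 'ah, nat) scm).
    is_scm VL DL Ml' \<and> is_scm VH DH Mh' \<and> L3_equal VL DL Ml' Ml \<and> L3_equal VH DH Mh' Mh \<and>
    constructive_tau_abstraction VL DL Ml' VH DH Mh' cl blk"
proof -
  obtain k :: nat and uL w where atoms_pos: "\<forall>n<k. uL n \<in> space (scm_P Ml) \<and> 0 < w n"
    and atoms_measure: "\<forall>P. response_determined VL DL Ml P \<longrightarrow>
      measure (scm_P Ml) {u \<in> space (scm_P Ml). P u} = (\<Sum>n<k. if P (uL n) then w n else 0)"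
    using response_atoms[OF Ml] by blast
  have uL: "uL n \<in> space (scm_P Ml)" and w: "0 < w n" and w_nonneg: "0 \<le> w n" if "n < k" for n
    using atoms_pos that by auto
  have atoms: "measure (scm_P Ml) {u \<in> space (scm_P Ml). P u} = (\<Sum>n<k. if P (uL n) then w n else 0)"
    if "response_determined VL DL Ml P" for P
    using atoms_measure that by blast
  have total: "(\<Sum>n<k. w n) = 1"
    using atoms[of "\<lambda>_. True"] prob_space.prob_space[OF is_scm_prob_space[OF Ml]]
    by (simp add: response_determined_def)
  have "\<exists>v\<in>space (scm_P Mh). high_profile Mh v = low_profile Ml (uL n)" if n: "n < k" for n
  proof (rule high_profile_exists[OF Ml Mh consistent uL[OF n]])
    have "w n \<le> (\<Sum>m<k. if low_profile Ml (uL m) = low_profile Ml (uL n) then w m else 0)"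
      using member_le_sum[of n "{..<k}" "\<lambda>m. if low_profile Ml (uL m) = low_profile Ml (uL n) then w m else 0"]
        n w_nonneg by simp
    also have "\<dots> = measure (scm_P Ml) {u \<in> space (scm_P Ml). low_profile Ml u = low_profile Ml (uL n)}"
      by (rule atoms[symmetric]) (rule response_determined_comp[OF response_determined_low_profile])
    finally show "0 < measure (scm_P Ml) {u \<in> space (scm_P Ml). low_profile Ml u = low_profile Ml (uL n)}"
      using w[OF n] by linarith
  qed
  then obtain uH where "\<And>n. n < k \<Longrightarrow> uH n \<in> space (scm_P Mh) \<and> high_profile Mh (uH n) = low_profile Ml (uL n)"
    by metis
  then have uH_space: "uH n \<in> space (scm_P Mh)" and uH_profile: "high_profile Mh (uH n) = low_profile Ml (uL n)"
    if "n < k" for n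
    using that by simp_all
  define Ml' where "Ml' = atomic_scm Ml k uL w"
  define Mh' where "Mh' = atomic_scm Mh k uH w"
  have "is_scm VL DL Ml'"
    unfolding Ml'_def using Ml uL w_nonneg total by (rule is_scm_atomic_scm)
  moreover have Mh': "is_scm VH DH Mh'"
    unfolding Mh'_def using Mh uH_space w_nonneg total by (rule is_scm_atomic_scm)
  moreover have "L3_equal VL DL Ml' Ml"
    unfolding Ml'_def using w_nonneg
  proof (rule L3_equal_atomic_scm)
    show "cf_prob VL DL Ml ts = (\<Sum>n<k. if cf_holds VL DL Ml ts (uL n) then w n else 0)" for ts
      unfolding cf_prob_eq_measure by (rule atoms[OF response_determined_cf_holds])
  qed
  moreover have "L3_equal VH DH Mh' Mh"
    unfolding Mh'_def using w_nonneg
  proof (rule L3_equal_atomic_scm)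
    fix ts assume ts: "valid_cf VH DH ts"
    define E where "E \<psi> \<longleftrightarrow> (\<forall>(Y, X, x, y) \<in> set ts. restrict (\<psi> (\<Union>(cl ` X), lift X x)) Y = y)" for \<psi>
    have "cf_prob VH DH Mh ts = measure (scm_P Ml) {u \<in> space (scm_P Ml). E (low_profile Ml u)}"
      unfolding E_def by (rule cf_prob_high_eq_measure_low_profile[OF Ml Mh consistent ts])
    also have "\<dots> = (\<Sum>n<k. if E (low_profile Ml (uL n)) then w n else 0)"
      by (rule atoms) (rule response_determined_comp[OF response_determined_low_profile])
    also have "\<dots> = (\<Sum>n<k. if cf_holds VH DH Mh ts (uH n) then w n else 0)"
      using uH_profile by (simp add: cf_holds_high_profile[OF ts] E_def)
    finally show "cf_prob VH DH Mh ts = (\<Sum>n<k. if cf_holds VH DH Mh ts (uH n) then w n else 0)" .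
  qed
  moreover have "constructive_tau_abstraction VL DL Ml' VH DH Mh' cl blk"
  proof (rule constructive_abstraction_if_profiles_agree[OF Mh'])
    show "scm_P Mh' = scm_P Ml'" by (simp add: Ml'_def Mh'_def atomic_scm_def)
    show "low_profile Ml' n = high_profile Mh' n" if "n \<in> space (scm_P Ml')" for n
      using that uH_profile
      by (simp add: Ml'_def Mh'_def space_atomic_scm low_profile_atomic_scm high_profile_atomic_scm)
  qed
  ultimately show ?thesis by blast
qed

end

theorem proposition1:
  fixes VL :: "'vl set" and DL :: "'vl \<Rightarrow> 'al set" and Ml :: "('vl, 'al, 'ul) scm"
    and VH :: "'vh set" and DH :: "'vh \<Rightarrow> 'ah set" and Mh :: "('vh, 'ah, 'uh) scm"
    and cl :: "'vh \<Rightarrow> 'vl set" and blk :: "'vh \<Rightarrow> 'ah \<Rightarrow> ('vl \<Rightarrow> 'al) set"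
  assumes "is_scm VL DL Ml"
    and "is_scm VH DH Mh"
    and "inter_clustering VL VH cl"
    and "admissible VL Ml VH cl"
    and "intra_clustering VL DL VH DH cl blk"
  shows "(L3_tau_consistent VL DL Ml VH DH Mh cl blk \<longrightarrow>
            (\<exists>(Ml' :: ('vl, 'al, nat) scm) (Mh' :: ('vh, 'ah, nat) scm).
               is_scm VL DL Ml' \<and> is_scm VH DH Mh' \<and>
               L3_equal VL DL Ml' Ml \<and> L3_equal VH DH Mh' Mh \<and>
               constructive_tau_abstraction VL DL Ml' VH DH Mh' cl blk))
       \<and> (\<forall>(Ml' :: ('vl, 'al, 'ul2) scm) (Mh' :: ('vh, 'ah, 'uh2) scm).
            is_scm VL DL Ml' \<and> is_scm VH DH Mh' \<and>
            L3_equal VL DL Ml' Ml \<and> L3_equal VH DH Mh' Mh \<and>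
            constructive_tau_abstraction VL DL Ml' VH DH Mh' cl blk
            \<longrightarrow> L3_tau_consistent VL DL Ml VH DH Mh cl blk)"
proof -
  interpret tau_clustering VL DL VH DH cl blk
    using assms(3,5) is_scm_domain_nonempty[OF assms(1)] by unfold_locales
  show ?thesis
  proof (intro conjI allI impI)
    assume "L3_tau_consistent VL DL Ml VH DH Mh cl blk"
    then show "\<exists>(Ml' :: ('vl, 'al, nat) scm) (Mh' :: ('vh, 'ah, nat) scm).
        is_scm VL DL Ml' \<and> is_scm VH DH Mh' \<and>
        L3_equal VL DL Ml' Ml \<and> L3_equal VH DH Mh' Mh \<and>
        constructive_tau_abstraction VL DL Ml' VH DH Mh' cl blk"
      by (rule L3_tau_consistent_imp_constructive_abstraction[OF assms(1,2)])
  next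
    fix Ml' :: "('vl, 'al, 'ul2) scm" and Mh' :: "('vh, 'ah, 'uh2) scm"
    assume "is_scm VL DL Ml' \<and> is_scm VH DH Mh' \<and>
        L3_equal VL DL Ml' Ml \<and> L3_equal VH DH Mh' Mh \<and>
        constructive_tau_abstraction VL DL Ml' VH DH Mh' cl blk"
    then show "L3_tau_consistent VL DL Ml VH DH Mh cl blk"
      using L3_tau_consistent_L3_equal_cong constructive_abstraction_imp_L3_tau_consistent by blast
  qed
qed

end
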